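(* Let $B,C^T\in\mathbb{R}^{n\times m}$ and assume $\operatorname{rank}B=r$. (a) There exists an invertible $T\in\mathbb{R}^{n\times n}$ with $(TB)^T=CT^{-1}$ if and only if $\operatorname{Ker}C^T=\operatorname{Ker}B$, $\operatorname{rank}(CB)=r$ and $CB$ is symmetric positive semidefinite; equivalently, if and only if there exists an invertible (which can be taken orthogonal) $V\in\mathbb{R}^{m\times m}$ such that $BV=[B_1\;\;0]$, $C^TV=[C_1^T\;\;0]$ with $B_1,C_1^T\in\mathbb{R}^{n\times r}$ of full column rank and $C_1B_1=YY^T$ symmetric positive definite for some invertible $Y\in\mathbb{R}^{r\times r}$. (b) Let $N_B\in\mathbb{R}^{n\times(n-r)}$ have columns forming a basis of $\operatorname{Ker}B^T$. If the conditions in (a) hold, with $V,B_1,C_1,Y$ as there, then every invertible $T$ with $(TB)^T=CT^{-1}$ has the form $T=U T_Z T_0$, where $$T_0=\begin{bmatrix}N_B^T\\ Y^{-1}C_1\end{bmatrix},\qquad T_Z=\begin{bmatrix}Z&0\\0&I\end{bmatrix},$$ with $U\in\mathbb{R}^{n\times n}$ an arbitrary real orthogonal matrix and $Z\in\mathbb{R}^{(n-r)\times(n-r)}$ an arbitrary nonsingular matrix. *)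

theory Defs
  imports "Jordan_Normal_Form.DL_Rank" "Jordan_Normal_Form.Matrix_Kernel"
begin

definition mrank :: "real mat \<Rightarrow> nat" where
  "mrank A = vec_space.rank (dim_row A) A"

definition append_cols :: "real mat \<Rightarrow> real mat \<Rightarrow> real mat" where
  "append_cols A B = four_block_mat A B (0\<^sub>m 0 (dim_col A)) (0\<^sub>m 0 (dim_col B))"

definition sym_psd :: "real mat \<Rightarrow> bool" where
  "sym_psd A \<longleftrightarrow> square_mat A \<and> transpose_mat A = A \<and>
     (\<forall>x \<in> carrier_vec (dim_col A). 0 \<le> x \<bullet> (A *\<^sub>v x))"

definition sym_pd :: "real mat \<Rightarrow> bool" where
  "sym_pd A \<longleftrightarrow> square_mat A \<and> transpose_mat A = A \<and>
     (\<forall>x \<in> carrier_vec (dim_col A). x \<noteq> 0\<^sub>v (dim_col A) \<longrightarrow> 0 < x \<bullet> (A *\<^sub>v x))"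

definition real_orth :: "real mat \<Rightarrow> bool" where
  "real_orth U \<longleftrightarrow> square_mat U \<and> transpose_mat U * U = 1\<^sub>m (dim_col U)"

definition cols_basis :: "real mat \<Rightarrow> real vec set \<Rightarrow> bool" where
  "cols_basis N K \<longleftrightarrow>
     (\<forall>x \<in> carrier_vec (dim_col N). N *\<^sub>v x = 0\<^sub>v (dim_row N) \<longrightarrow> x = 0\<^sub>v (dim_col N)) \<and>
     K = (\<lambda>x. N *\<^sub>v x) ` carrier_vec (dim_col N)"

definition inv_cond :: "real mat \<Rightarrow> real mat \<Rightarrow> real mat \<Rightarrow> bool" where
  "inv_cond T B C \<longleftrightarrow> (\<exists>Ti. inverts_mat T Ti \<and> inverts_mat Ti T \<and>
      transpose_mat (T * B) = C * Ti)"

definition split_cond ::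
  "nat \<Rightarrow> nat \<Rightarrow> nat \<Rightarrow> real mat \<Rightarrow> real mat \<Rightarrow> real mat \<Rightarrow> real mat \<Rightarrow> real mat \<Rightarrow> real mat \<Rightarrow> bool" where
  "split_cond n m r B C V B1 C1 Y \<longleftrightarrow>
     B1 \<in> carrier_mat n r \<and> C1 \<in> carrier_mat r n \<and> Y \<in> carrier_mat r r \<and>
     B * V = append_cols B1 (0\<^sub>m n (m - r)) \<and>
     transpose_mat C * V = append_cols (transpose_mat C1) (0\<^sub>m n (m - r)) \<and>
     mrank B1 = r \<and> mrank (transpose_mat C1) = r \<and>
     invertible_mat Y \<and> C1 * B1 = Y * transpose_mat Y \<and> sym_pd (C1 * B1)"

end

theory Submission
  imports Defs
begin

text \<open>
  \<open>T\<close> solves \<open>(T B)\<^sup>T = C T\<^sup>-\<^sup>1\<close> exactly when \<open>T\<close> is invertible and \<open>M = T\<^sup>T T\<close> satisfies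
  \<open>M B = C\<^sup>T\<close>. Then \<open>C B = (T B)\<^sup>T (T B)\<close> is positive semidefinite with the kernel, hence the rank,
  of \<open>B\<close>, and \<open>Ker C\<^sup>T = Ker B\<close> because \<open>M\<close> is invertible. Conversely, an orthogonal \<open>V\<close> whose
  last \<open>m - r\<close> columns span \<open>Ker B\<close> turns \<open>B\<close> and \<open>C\<^sup>T\<close> into \<open>[B\<^sub>1 0]\<close> and \<open>[C\<^sub>1\<^sup>T 0]\<close>,
  \<open>C\<^sub>1 B\<^sub>1\<close> is positive definite, and a Cholesky factorization provides \<open>Y\<close>. In these
  coordinates the equation becomes \<open>M B\<^sub>1 = C\<^sub>1\<^sup>T\<close>, which \<open>T\<^sub>0 = [N\<^sub>B\<^sup>T; Y\<^sup>-\<^sup>1 C\<^sub>1]\<close> solves since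
  \<open>T\<^sub>0 B\<^sub>1 Y\<^sup>-\<^sup>T\<close> is the embedding of the last \<open>r\<close> coordinates. For any solution \<open>T\<close>, the last
  \<open>r\<close> columns of \<open>S = T T\<^sub>0\<^sup>-\<^sup>1\<close> are orthonormal and orthogonal to the first \<open>n - r\<close> ones, so
  \<open>S = U T\<^sub>Z\<close> with \<open>U\<close> orthogonal and \<open>Z\<close> a Cholesky factor of the Gram matrix of those columns.
\<close>

lemma mult_mat_vec_zero [simp]:
  "A \<in> carrier_mat p q \<Longrightarrow> A *\<^sub>v 0\<^sub>v q = (0\<^sub>v p :: 'a :: semiring_0 vec)"
  by (intro eq_vecI) auto

lemma zero_mat_mult_vec [simp]:
  "v \<in> carrier_vec q \<Longrightarrow> 0\<^sub>m p q *\<^sub>v v = (0\<^sub>v p :: 'a :: semiring_0 vec)"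
  by (intro eq_vecI) auto

lemma zero_vec_append: "0\<^sub>v (n1 + n2) = (0\<^sub>v n1 @\<^sub>v 0\<^sub>v n2 :: 'a :: zero vec)"
  by (intro eq_vecI) auto

lemma assoc_mult_mat_dims:
  "dim_col (A :: 'a :: semiring_0 mat) = dim_row B \<Longrightarrow> dim_col B = dim_row C \<Longrightarrow> A * B * C = A * (B * C)"
  by (rule assoc_mult_mat[of _ "dim_row A" "dim_col A" _ "dim_col B" _ "dim_col C"]) auto

lemma transpose_mult_dims:
  "dim_col (A :: 'a :: comm_semiring_0 mat) = dim_row B \<Longrightarrow>
    transpose_mat (A * B) = transpose_mat B * transpose_mat A"
  by (rule transpose_mult[of _ "dim_row A" "dim_col A" _ "dim_col B"]) auto

lemma transpose_smult_mat: "transpose_mat (c \<cdot>\<^sub>m A) = c \<cdot>\<^sub>m transpose_mat A"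
  by (intro eq_matI) auto

lemma mat_eq_on_vectorsI:
  fixes A B :: "'a :: semiring_1 mat"
  assumes A: "A \<in> carrier_mat p q" and B: "B \<in> carrier_mat p q"
    and eq: "\<And>x. x \<in> carrier_vec q \<Longrightarrow> A *\<^sub>v x = B *\<^sub>v x"
  shows "A = B"
proof (rule eq_matI)
  fix i j assume ij: "i < dim_row B" "j < dim_col B"
  have "(A *\<^sub>v unit_vec q j) $ i = (B *\<^sub>v unit_vec q j) $ i" using eq[of "unit_vec q j"] by simp
  then show "A $$ (i, j) = B $$ (i, j)" using A B ij by simp
qed (use A B in auto)

section \<open>Injective matrices and rank\<close>

definition trivial_kernel :: "'a :: field mat \<Rightarrow> bool" where
  "trivial_kernel A \<longleftrightarrow>
     (\<forall>x \<in> carrier_vec (dim_col A). A *\<^sub>v x = 0\<^sub>v (dim_row A) \<longrightarrow> x = 0\<^sub>v (dim_col A))"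

lemma trivial_kernelI:
  assumes "A \<in> carrier_mat p q" "\<And>x. x \<in> carrier_vec q \<Longrightarrow> A *\<^sub>v x = 0\<^sub>v p \<Longrightarrow> x = 0\<^sub>v q"
  shows "trivial_kernel A"
  using assms unfolding trivial_kernel_def by auto

lemma trivial_kernelD:
  assumes "trivial_kernel A" "A \<in> carrier_mat p q" "x \<in> carrier_vec q" "A *\<^sub>v x = 0\<^sub>v p"
  shows "x = 0\<^sub>v q"
  using assms unfolding trivial_kernel_def by auto

lemma trivial_kernel_if_left_inverse:
  assumes A: "A \<in> carrier_mat p q" and L: "L \<in> carrier_mat q p" and LA: "L * A = 1\<^sub>m q"
  shows "trivial_kernel A"
proof (rule trivial_kernelI[OF A])
  fix x assume x: "x \<in> carrier_vec q" and "A *\<^sub>v x = 0\<^sub>v p"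
  then have "(L * A) *\<^sub>v x = 0\<^sub>v q" using A L by simp
  then show "x = 0\<^sub>v q" using LA x by simp
qed

lemma trivial_kernel_mult:
  assumes A: "A \<in> carrier_mat p q" and B: "B \<in> carrier_mat q k"
    and "trivial_kernel A" "trivial_kernel B"
  shows "trivial_kernel (A * B)"
proof (rule trivial_kernelI)
  fix x assume x: "x \<in> carrier_vec k" and "(A * B) *\<^sub>v x = 0\<^sub>v p"
  then have "A *\<^sub>v (B *\<^sub>v x) = 0\<^sub>v p" using A B by simp
  then have "B *\<^sub>v x = 0\<^sub>v q" using assms(3) A B x by (simp add: trivial_kernelD)
  then show "x = 0\<^sub>v k" using assms(4) B x by (simp add: trivial_kernelD)
qed (use A B in auto)

lemma trivial_kernel_of_mult:
  assumes A: "A \<in> carrier_mat p q" and B: "B \<in> carrier_mat q k" and "trivial_kernel (A * B)"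
  shows "trivial_kernel B"
  using assms(3) A B by (intro trivial_kernelI[OF B]) (auto dest: trivial_kernelD[of _ p k])

lemma invertible_matE:
  assumes A: "A \<in> carrier_mat n n" and "invertible_mat A"
  obtains Ai where "Ai \<in> carrier_mat n n" "A * Ai = 1\<^sub>m n" "Ai * A = 1\<^sub>m n"
proof -
  obtain Ai where AAi: "A * Ai = 1\<^sub>m n" and AiA: "Ai * A = 1\<^sub>m (dim_row Ai)"
    using assms unfolding invertible_mat_def inverts_mat_def by auto
  have "Ai \<in> carrier_mat n n"
    using arg_cong[OF AAi, of dim_col] arg_cong[OF AiA, of dim_col] A by auto
  with AAi AiA that show thesis by simp
qed

lemma invertible_matI:
  assumes "A \<in> carrier_mat n n" "Ai \<in> carrier_mat n n" "A * Ai = 1\<^sub>m n" "Ai * A = 1\<^sub>m n"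
  shows "invertible_mat A"
  using assms unfolding invertible_mat_def inverts_mat_def by auto

lemma invertible_mat_iff_trivial_kernel:
  fixes A :: "'a :: field mat"
  assumes A: "A \<in> carrier_mat n n"
  shows "invertible_mat A \<longleftrightarrow> trivial_kernel A"
proof
  assume "invertible_mat A"
  with A obtain Ai where "Ai \<in> carrier_mat n n" "Ai * A = 1\<^sub>m n" by (rule invertible_matE)
  then show "trivial_kernel A" using A by (intro trivial_kernel_if_left_inverse)
next
  assume "trivial_kernel A"
  then have "det A \<noteq> 0"
    using det_0_iff_vec_prod_zero_field[OF A] A by (auto dest: trivial_kernelD)
  from det_non_zero_imp_unit[OF A this] obtain Ai where
    "Ai \<in> carrier_mat n n" "A * Ai = 1\<^sub>m n" "Ai * A = 1\<^sub>m n"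
    unfolding Units_def by (auto simp: ring_mat_def)
  then show "invertible_mat A" using A by (intro invertible_matI)
qed

lemma invertible_mat_mult:
  fixes A :: "'a :: field mat"
  assumes "A \<in> carrier_mat n n" "B \<in> carrier_mat n n" "invertible_mat A" "invertible_mat B"
  shows "invertible_mat (A * B)"
  using assms trivial_kernel_mult[of A n n B n]
  by (simp add: invertible_mat_iff_trivial_kernel[of _ n])

lemma invertible_mat_transpose:
  fixes A :: "'a :: field mat"
  assumes A: "A \<in> carrier_mat n n" and "invertible_mat A"
  shows "invertible_mat (transpose_mat A)"
proof -
  obtain Ai where "Ai \<in> carrier_mat n n" "A * Ai = 1\<^sub>m n" "Ai * A = 1\<^sub>m n"
    using assms by (rule invertible_matE)
  then show ?thesis using A
    by (intro invertible_matI[of _ n "transpose_mat Ai"]) (auto simp flip: transpose_mult)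
qed

lemma (in vec_space) trivial_kernel_lin_indpt_cols:
  assumes A: "A \<in> carrier_mat n q" and "trivial_kernel A"
  shows "distinct (cols A)" "lin_indpt (set (cols A))"
proof -
  show dist: "distinct (cols A)"
  proof (rule ccontr)
    assume "\<not> distinct (cols A)"
    then obtain i j where ij: "i < q" "j < q" "i \<noteq> j" "col A i = col A j"
      using A by (auto simp: distinct_conv_nth)
    define v :: "'a vec" where "v = unit_vec q i - unit_vec q j"
    have v: "v \<in> carrier_vec q" "v $ i = 1" using ij by (auto simp: v_def)
    have "A $$ (k, i) = A $$ (k, j)" if "k < n" for k
      using arg_cong[OF ij(4), of "\<lambda>c. c $ k"] that ij A by (metis carrier_matD index_col)
    then have "A *\<^sub>v v = 0\<^sub>v n"
      using ij A by (intro eq_vecI) (auto simp: v_def mult_minus_distrib_mat_vec)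
    then show False using v ij assms(2) A by (auto dest: trivial_kernelD)
  qed
  show "lin_indpt (set (cols A))"
    using lin_depE[OF A _ dist] assms(2) A by (metis trivial_kernelD)
qed

lemma (in vec_space) full_rank_distinct_cols:
  assumes A: "A \<in> carrier_mat n nc" and rk: "rank A = nc"
  shows "distinct (cols A)"
proof (rule ccontr)
  assume "\<not> distinct (cols A)"
  then have "card (set (cols A)) < nc"
    using A card_length[of "cols A"] card_distinct[of "cols A"] by fastforce
  moreover obtain S where S: "maximal S (\<lambda>T. T \<subseteq> set (cols A) \<and> lin_indpt T)"
    using maximal_exists[of "(\<lambda>T. T \<subseteq> set (cols A) \<and> lin_indpt T)" "card (set (cols A))" "{}"]
    by (meson List.finite_set card_mono empty_iff empty_subsetI finite_lin_indpt2 rev_finite_subset)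
  moreover have "card S \<le> card (set (cols A))" using S by (simp add: card_mono maximal_def)
  ultimately show False using rank_card_indpt[OF A S] rk by simp
qed

lemma mrank_eq_dim_col_iff:
  assumes A: "A \<in> carrier_mat p q"
  shows "mrank A = q \<longleftrightarrow> trivial_kernel A"
proof -
  interpret vec_space "TYPE(real)" p .
  show ?thesis
  proof
    assume rk: "mrank A = q"
    then have dist: "distinct (cols A)"
      using full_rank_distinct_cols[OF A] A by (simp add: mrank_def)
    then have "lin_indpt (set (cols A))"
      using full_rank_lin_indpt[OF A] rk A by (simp add: mrank_def)
    then show "trivial_kernel A"
      using lin_depI[OF A _ _ _ dist] by (intro trivial_kernelI[OF A]) blast
  next
    assume "trivial_kernel A"
    then show "mrank A = q"
      using lin_indpt_full_rank[OF A] trivial_kernel_lin_indpt_cols[OF A] A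
      by (simp add: mrank_def)
  qed
qed

lemma trivial_kernel_dim_le:
  assumes A: "A \<in> carrier_mat p q" and "trivial_kernel A"
  shows "q \<le> p"
proof -
  interpret vec_space "TYPE('a :: field)" p .
  have "set (cols A) \<subseteq> carrier_vec p" using A cols_dim by blast
  then have "card (set (cols A)) \<le> p"
    using li_le_dim(2)[OF fin_dim _ trivial_kernel_lin_indpt_cols(2)[OF assms]] by (simp add: dim_is_n)
  then show ?thesis
    using distinct_card[OF trivial_kernel_lin_indpt_cols(1)[OF assms]] A by simp
qed

lemma mrank_eqI:
  assumes A: "A \<in> carrier_mat p q" and A': "A' \<in> carrier_mat p q'"
    and range: "(\<lambda>x. A *\<^sub>v x) ` carrier_vec q = (\<lambda>x. A' *\<^sub>v x) ` carrier_vec q'"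
  shows "mrank A = mrank A'"
proof -
  have "vec_space.col_space p A = vec_space.col_space p A'"
    using range A A' unfolding vec_space.col_space_eq[OF A] vec_space.col_space_eq[OF A']
    by (auto simp: set_eq_iff image_iff) metis+
  then show ?thesis
    using A A' by (simp add: mrank_def vec_space.rank_def vec_space.col_space_def)
qed

lemma mrank_mult_invertible:
  assumes A: "A \<in> carrier_mat p q" and V: "V \<in> carrier_mat q q" and "invertible_mat V"
  shows "mrank (A * V) = mrank A"
proof (rule mrank_eqI[of _ p q _ q])
  obtain Vi where Vi: "Vi \<in> carrier_mat q q" "V * Vi = 1\<^sub>m q"
    using invertible_matE[OF V assms(3)] by metis
  have "(A * V) *\<^sub>v x \<in> (\<lambda>x. A *\<^sub>v x) ` carrier_vec q" if "x \<in> carrier_vec q" for x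
    using A V that by (intro rev_image_eqI[of "V *\<^sub>v x"]) auto
  moreover have "A *\<^sub>v x \<in> (\<lambda>x. (A * V) *\<^sub>v x) ` carrier_vec q" if "x \<in> carrier_vec q" for x
    using assoc_mult_mat_vec[OF V Vi(1) that] Vi that A V by (intro rev_image_eqI[of "Vi *\<^sub>v x"]) auto
  ultimately show "(\<lambda>x. (A * V) *\<^sub>v x) ` carrier_vec q = (\<lambda>x. A *\<^sub>v x) ` carrier_vec q"
    by (intro equalityI image_subsetI) auto
qed (use A V in auto)

lemma mult_eq_0_if_range_in_kernel:
  assumes A: "A \<in> carrier_mat p q" and X: "X \<in> carrier_mat q s"
    and ker: "\<And>y. y \<in> carrier_vec s \<Longrightarrow> X *\<^sub>v y \<in> mat_kernel A"
  shows "A * X = 0\<^sub>m p s"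
  using ker A X by (intro mat_eq_on_vectorsI[of _ p s]) (auto simp: mat_kernel_def)

lemma mult_eq_0_if_mat_kernel_subset:
  assumes A: "A \<in> carrier_mat p q" and A': "A' \<in> carrier_mat p' q" and X: "X \<in> carrier_mat q s"
    and AX: "A * X = 0\<^sub>m p s" and ker: "mat_kernel A \<subseteq> mat_kernel A'"
  shows "A' * X = 0\<^sub>m p' s"
proof (rule mult_eq_0_if_range_in_kernel[OF A' X])
  fix y :: "'a vec" assume y: "y \<in> carrier_vec s"
  then have "A *\<^sub>v (X *\<^sub>v y) = 0\<^sub>v p" using A X AX by (metis assoc_mult_mat_vec zero_mat_mult_vec)
  then have "X *\<^sub>v y \<in> mat_kernel A" using A X y by (auto intro: mat_kernelI)
  then show "X *\<^sub>v y \<in> mat_kernel A'" using ker by auto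
qed

lemma trivial_kernel_mult_if_mat_kernel_subset:
  assumes A: "A \<in> carrier_mat p q" and A': "A' \<in> carrier_mat p' q" and X: "X \<in> carrier_mat q s"
    and "trivial_kernel (A * X)" and ker: "mat_kernel A' \<subseteq> mat_kernel A"
  shows "trivial_kernel (A' * X)"
proof (rule trivial_kernelI)
  fix y assume y: "y \<in> carrier_vec s" and "(A' * X) *\<^sub>v y = 0\<^sub>v p'"
  then have "X *\<^sub>v y \<in> mat_kernel A'" using A' X by (auto intro: mat_kernelI)
  then have "(A * X) *\<^sub>v y = 0\<^sub>v p" using ker A X y by (auto simp: mat_kernel_def)
  then show "y = 0\<^sub>v s" using assms(4) A X y by (auto dest: trivial_kernelD)
qed (use A' X in auto)

section \<open>Block matrices\<close>

lemma four_block_mat_degenerate: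
  "A \<in> carrier_mat p q \<Longrightarrow> four_block_mat A (0\<^sub>m p 0) (0\<^sub>m 0 q) (0\<^sub>m 0 0) = A"
  by (intro eq_matI) auto

lemma append_cols_dims [simp]:
  "dim_row (append_cols A B) = dim_row A" "dim_col (append_cols A B) = dim_col A + dim_col B"
  unfolding append_cols_def by auto

lemma append_rows_dims [simp]:
  "dim_row (A @\<^sub>r B) = dim_row A + dim_row B" "dim_col (A @\<^sub>r B) = dim_col A"
  unfolding append_rows_def by auto

lemma append_cols_carrier [simp, intro]:
  "A \<in> carrier_mat p q1 \<Longrightarrow> B \<in> carrier_mat p q2 \<Longrightarrow> append_cols A B \<in> carrier_mat p (q1 + q2)"
  by (intro carrier_matI) auto

lemma index_append_cols [simp]:
  "i < dim_row A \<Longrightarrow> j < dim_col A + dim_col B \<Longrightarrow>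
    append_cols A B $$ (i, j) = (if j < dim_col A then A $$ (i, j) else B $$ (i, j - dim_col A))"
  unfolding append_cols_def by auto

lemma index_append_rows [simp]:
  "i < dim_row A + dim_row B \<Longrightarrow> j < dim_col A \<Longrightarrow>
    (A @\<^sub>r B) $$ (i, j) = (if i < dim_row A then A $$ (i, j) else B $$ (i - dim_row A, j))"
  unfolding append_rows_def by auto

lemma transpose_append_cols:
  "A \<in> carrier_mat p q1 \<Longrightarrow> B \<in> carrier_mat p q2 \<Longrightarrow>
    transpose_mat (append_cols A B) = transpose_mat A @\<^sub>r transpose_mat B"
  by (intro eq_matI) auto

lemma transpose_append_rows:
  "A \<in> carrier_mat p1 q \<Longrightarrow> B \<in> carrier_mat p2 q \<Longrightarrow>
    transpose_mat (A @\<^sub>r B) = append_cols (transpose_mat A) (transpose_mat B)"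
  by (intro eq_matI) auto

lemma mult_append_cols:
  assumes "M \<in> carrier_mat s p" "A \<in> carrier_mat p q1" "B \<in> carrier_mat p q2"
  shows "M * append_cols A B = append_cols (M * A) (M * B)"
proof -
  have "four_block_mat M (0\<^sub>m s 0) (0\<^sub>m 0 p) (0\<^sub>m 0 0) * append_cols A B
    = four_block_mat (M * A + 0\<^sub>m s 0 * 0\<^sub>m 0 q1) (M * B + 0\<^sub>m s 0 * 0\<^sub>m 0 q2)
        (0\<^sub>m 0 p * A + 0\<^sub>m 0 0 * 0\<^sub>m 0 q1) (0\<^sub>m 0 p * B + 0\<^sub>m 0 0 * 0\<^sub>m 0 q2)"
    unfolding append_cols_def using assms
    by (simp only: carrier_matD) (rule mult_four_block_mat; auto)
  then show ?thesis using assms by (simp add: four_block_mat_degenerate append_cols_def)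
qed

lemma append_rows_mult:
  assumes "A \<in> carrier_mat p1 q" "B \<in> carrier_mat p2 q" "M \<in> carrier_mat q s"
  shows "(A @\<^sub>r B) * M = (A * M) @\<^sub>r (B * M)"
proof -
  have "(A @\<^sub>r B) * four_block_mat M (0\<^sub>m q 0) (0\<^sub>m 0 s) (0\<^sub>m 0 0)
    = four_block_mat (A * M + 0\<^sub>m p1 0 * 0\<^sub>m 0 s) (A * 0\<^sub>m q 0 + 0\<^sub>m p1 0 * 0\<^sub>m 0 0)
        (B * M + 0\<^sub>m p2 0 * 0\<^sub>m 0 s) (B * 0\<^sub>m q 0 + 0\<^sub>m p2 0 * 0\<^sub>m 0 0)"
    unfolding append_rows_def using assms
    by (simp only: carrier_matD) (rule mult_four_block_mat; auto)
  then show ?thesis using assms by (simp add: four_block_mat_degenerate append_rows_def)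
qed

lemma append_cols_mult_append_rows:
  assumes "A \<in> carrier_mat p q1" "B \<in> carrier_mat p q2" "C \<in> carrier_mat q1 s" "D \<in> carrier_mat q2 s"
  shows "append_cols A B * (C @\<^sub>r D) = A * C + B * D"
proof -
  have "append_cols A B * (C @\<^sub>r D) = four_block_mat (A * C + B * D) (A * 0\<^sub>m q1 0 + B * 0\<^sub>m q2 0)
      (0\<^sub>m 0 q1 * C + 0\<^sub>m 0 q2 * D) (0\<^sub>m 0 q1 * 0\<^sub>m q1 0 + 0\<^sub>m 0 q2 * 0\<^sub>m q2 0)"
    unfolding append_cols_def append_rows_def using assms
    by (simp only: carrier_matD) (rule mult_four_block_mat; auto)
  then show ?thesis using assms by (simp add: four_block_mat_degenerate)
qed

lemma append_rows_mult_append_cols: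
  assumes "A \<in> carrier_mat p1 q" "B \<in> carrier_mat p2 q" "C \<in> carrier_mat q s1" "D \<in> carrier_mat q s2"
  shows "(A @\<^sub>r B) * append_cols C D = four_block_mat (A * C) (A * D) (B * C) (B * D)"
proof -
  have "(A @\<^sub>r B) * append_cols C D = four_block_mat (A * C + 0\<^sub>m p1 0 * 0\<^sub>m 0 s1)
      (A * D + 0\<^sub>m p1 0 * 0\<^sub>m 0 s2) (B * C + 0\<^sub>m p2 0 * 0\<^sub>m 0 s1) (B * D + 0\<^sub>m p2 0 * 0\<^sub>m 0 s2)"
    unfolding append_cols_def append_rows_def using assms
    by (simp only: carrier_matD) (rule mult_four_block_mat; auto)
  then show ?thesis using assms by simp
qed

lemma four_block_mult_append_rows:
  assumes "A \<in> carrier_mat p1 q1" "B \<in> carrier_mat p1 q2" "C \<in> carrier_mat p2 q1"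
    "D \<in> carrier_mat p2 q2" "X \<in> carrier_mat q1 s" "W \<in> carrier_mat q2 s"
  shows "four_block_mat A B C D * (X @\<^sub>r W) = (A * X + B * W) @\<^sub>r (C * X + D * W)"
proof -
  have "four_block_mat A B C D * (X @\<^sub>r W) = four_block_mat (A * X + B * W)
      (A * 0\<^sub>m q1 0 + B * 0\<^sub>m q2 0) (C * X + D * W) (C * 0\<^sub>m q1 0 + D * 0\<^sub>m q2 0)"
    unfolding append_rows_def using assms
    by (simp only: carrier_matD) (rule mult_four_block_mat; auto)
  then show ?thesis using assms by (simp add: append_rows_def)
qed

lemma append_cols_mult_four_block:
  assumes "A \<in> carrier_mat q1 s1" "B \<in> carrier_mat q1 s2" "C \<in> carrier_mat q2 s1"
    "D \<in> carrier_mat q2 s2" "X \<in> carrier_mat p q1" "W \<in> carrier_mat p q2"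
  shows "append_cols X W * four_block_mat A B C D = append_cols (X * A + W * C) (X * B + W * D)"
proof -
  have "append_cols X W * four_block_mat A B C D = four_block_mat (X * A + W * C) (X * B + W * D)
      (0\<^sub>m 0 q1 * A + 0\<^sub>m 0 q2 * C) (0\<^sub>m 0 q1 * B + 0\<^sub>m 0 q2 * D)"
    unfolding append_cols_def using assms
    by (simp only: carrier_matD) (rule mult_four_block_mat; auto)
  then show ?thesis using assms by (simp add: append_cols_def)
qed

lemma append_cols_mult_vec:
  assumes A: "A \<in> carrier_mat p q1" and B: "B \<in> carrier_mat p q2"
    and x: "x \<in> carrier_vec q1" and y: "y \<in> carrier_vec q2"
  shows "append_cols A B *\<^sub>v (x @\<^sub>v y) = A *\<^sub>v x + B *\<^sub>v y"
proof -
  have "append_cols A B *\<^sub>v (x @\<^sub>v y) = (A *\<^sub>v x + B *\<^sub>v y) @\<^sub>v (0\<^sub>m 0 q1 *\<^sub>v x + 0\<^sub>m 0 q2 *\<^sub>v y)"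
    unfolding append_cols_def using assms by (simp only: carrier_matD) (rule four_block_mat_mult_vec; auto)
  then show ?thesis using assms by (intro eq_vecI) auto
qed

lemma trivial_kernel_append_cols:
  assumes N: "N \<in> carrier_mat p k" and K: "K \<in> carrier_mat p l" and W: "W \<in> carrier_mat s p"
    and WN: "W * N = 0\<^sub>m s k" and WK: "trivial_kernel (W * K)" and N_ker: "trivial_kernel N"
  shows "trivial_kernel (append_cols N K)"
proof (rule trivial_kernelI)
  show "append_cols N K \<in> carrier_mat p (k + l)" using N K by simp
  fix z :: "real vec" assume z: "z \<in> carrier_vec (k + l)" and "append_cols N K *\<^sub>v z = 0\<^sub>v p"
  define u w where "u = vec_first z k" and "w = vec_last z l"
  have uw: "u \<in> carrier_vec k" "w \<in> carrier_vec l" "z = u @\<^sub>v w"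
    using z by (auto simp: u_def w_def vec_first_last_append)
  have sum: "N *\<^sub>v u + K *\<^sub>v w = 0\<^sub>v p"
    using \<open>append_cols N K *\<^sub>v z = 0\<^sub>v p\<close> uw append_cols_mult_vec[OF N K uw(1,2)] by simp
  have "W *\<^sub>v (N *\<^sub>v u) = 0\<^sub>v s" using assoc_mult_mat_vec[OF W N uw(1)] WN uw by simp
  then have "(W * K) *\<^sub>v w = W *\<^sub>v (N *\<^sub>v u + K *\<^sub>v w)"
    using W N K uw by (simp add: mult_add_distrib_mat_vec[of _ s p])
  then have "w = 0\<^sub>v l" using sum WK W K uw by (auto dest: trivial_kernelD)
  then have "u = 0\<^sub>v k" using sum N K uw N_ker by (auto dest: trivial_kernelD)
  then show "z = 0\<^sub>v (k + l)" using uw \<open>w = 0\<^sub>v l\<close> by auto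
qed

lemma mrank_append_zero_cols:
  assumes A: "A \<in> carrier_mat p d"
  shows "mrank (append_cols A (0\<^sub>m p e)) = mrank A"
proof (rule mrank_eqI[of _ p "d + e" _ d])
  have "append_cols A (0\<^sub>m p e) *\<^sub>v z \<in> (\<lambda>x. A *\<^sub>v x) ` carrier_vec d" if "z \<in> carrier_vec (d + e)" for z
    using append_cols_mult_vec[OF A zero_carrier_mat, of "vec_first z d" "vec_last z e"] A that
    by (intro rev_image_eqI[of "vec_first z d"]) (auto simp: vec_first_last_append)
  moreover have "A *\<^sub>v x \<in> (\<lambda>x. append_cols A (0\<^sub>m p e) *\<^sub>v x) ` carrier_vec (d + e)"
    if "x \<in> carrier_vec d" for x
    using append_cols_mult_vec[OF A zero_carrier_mat that, of "0\<^sub>v e"] A that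
    by (intro rev_image_eqI[of "x @\<^sub>v 0\<^sub>v e"]) auto
  ultimately show "(\<lambda>x. append_cols A (0\<^sub>m p e) *\<^sub>v x) ` carrier_vec (d + e) = (\<lambda>x. A *\<^sub>v x) ` carrier_vec d"
    by (intro equalityI image_subsetI) auto
qed (use A in auto)

lemma mrank_eq_first_block:
  assumes A: "A \<in> carrier_mat p q" and V: "V \<in> carrier_mat q q" "invertible_mat V"
    and A1: "A1 \<in> carrier_mat p d" and AV: "A * V = append_cols A1 (0\<^sub>m p e)"
  shows "mrank A = mrank A1"
  using mrank_mult_invertible[OF A V] mrank_append_zero_cols[OF A1, of e] AV by simp

lemma block_diag_one_invertible:
  fixes Z :: "'a :: field mat"
  assumes Z: "Z \<in> carrier_mat a a" "invertible_mat Z"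
  shows "invertible_mat (four_block_mat Z (0\<^sub>m a b) (0\<^sub>m b a) (1\<^sub>m b))"
proof -
  obtain Zi where Zi: "Zi \<in> carrier_mat a a" "Z * Zi = 1\<^sub>m a" "Zi * Z = 1\<^sub>m a"
    by (rule invertible_matE[OF Z])
  let ?D = "\<lambda>X. four_block_mat X (0\<^sub>m a b) (0\<^sub>m b a) (1\<^sub>m b)"
  have "?D X * ?D X' = ?D (X * X')" if "X \<in> carrier_mat a a" "X' \<in> carrier_mat a a" for X X' :: "'a mat"
    using that by (subst mult_four_block_mat[of _ a a _ b _ b]) auto
  then show ?thesis
    using Z Zi by (intro invertible_matI[of _ "a + b" "?D Zi"]) auto
qed

lemma block_diag_one_mult_last_block:
  fixes Z :: "'a :: field mat"
  assumes "Z \<in> carrier_mat a a"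
  shows "four_block_mat Z (0\<^sub>m a b) (0\<^sub>m b a) (1\<^sub>m b) * (0\<^sub>m a b @\<^sub>r 1\<^sub>m b) = 0\<^sub>m a b @\<^sub>r 1\<^sub>m b"
  using assms by (subst four_block_mult_append_rows[of _ a a _ b _ b _ _ b]) auto

section \<open>Positive definite matrices and the Cholesky factorization\<close>

lemma scalar_prod_self_ge_0 [simp]: "0 \<le> (v :: real vec) \<bullet> v"
  unfolding scalar_prod_def by (auto intro: sum_nonneg)

lemma scalar_prod_self_eq_0_iff:
  assumes "(v :: real vec) \<in> carrier_vec n"
  shows "v \<bullet> v = 0 \<longleftrightarrow> v = 0\<^sub>v n"
proof -
  have "conjugate v = v" by (intro eq_vecI) auto
  then show ?thesis using conjugate_square_eq_0_vec[OF assms] by simp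
qed

lemma sym_mat_bilinear_comm:
  fixes P :: "'a :: comm_ring mat"
  assumes P: "P \<in> carrier_mat k k" and sym: "transpose_mat P = P"
    and x: "x \<in> carrier_vec k" and y: "y \<in> carrier_vec k"
  shows "x \<bullet> (P *\<^sub>v y) = y \<bullet> (P *\<^sub>v x)"
  using transpose_vec_mult_scalar[OF P y x] comm_scalar_prod[OF x, of "P *\<^sub>v y"]
    comm_scalar_prod[OF y, of "P *\<^sub>v x"] P sym x y by simp

lemma gram_quadratic_form:
  assumes A: "(A :: 'a :: comm_ring mat) \<in> carrier_mat p q" and x: "x \<in> carrier_vec q"
  shows "x \<bullet> ((transpose_mat A * A) *\<^sub>v x) = (A *\<^sub>v x) \<bullet> (A *\<^sub>v x)"
  using transpose_vec_mult_scalar[OF A x, of "A *\<^sub>v x"] comm_scalar_prod[OF x, of "transpose_mat A *\<^sub>v (A *\<^sub>v x)"] A x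
  by simp

lemma sym_psd_gram:
  assumes A: "A \<in> carrier_mat p q"
  shows "sym_psd (transpose_mat A * A)"
  using A gram_quadratic_form[OF A] by (auto simp: sym_psd_def transpose_mult[of _ q p])

lemma sym_pd_gram:
  assumes A: "A \<in> carrier_mat p q" and "trivial_kernel A"
  shows "sym_pd (transpose_mat A * A)"
proof -
  have "0 < (A *\<^sub>v x) \<bullet> (A *\<^sub>v x)" if "x \<in> carrier_vec q" "x \<noteq> 0\<^sub>v q" for x
    using that assms scalar_prod_self_ge_0[of "A *\<^sub>v x"] scalar_prod_self_eq_0_iff[of "A *\<^sub>v x" p]
    by (auto dest: trivial_kernelD simp: order_le_less)
  then show ?thesis
    using A gram_quadratic_form[OF A] by (auto simp: sym_pd_def transpose_mult[of _ q p])
qed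

lemma mat_kernel_gram:
  assumes A: "(A :: real mat) \<in> carrier_mat p q"
  shows "mat_kernel (transpose_mat A * A) = mat_kernel A"
proof
  have G: "transpose_mat A * A \<in> carrier_mat q q" using A by simp
  show "mat_kernel (transpose_mat A * A) \<subseteq> mat_kernel A"
  proof
    fix x assume "x \<in> mat_kernel (transpose_mat A * A)"
    then have x: "x \<in> carrier_vec q" and "(transpose_mat A * A) *\<^sub>v x = 0\<^sub>v q"
      using mat_kernelD[OF G] by auto
    then have "(A *\<^sub>v x) \<bullet> (A *\<^sub>v x) = 0" using gram_quadratic_form[OF A x] by simp
    then have "A *\<^sub>v x = 0\<^sub>v p" using scalar_prod_self_eq_0_iff[of "A *\<^sub>v x" p] A x by simp
    then show "x \<in> mat_kernel A" using mat_kernelI[OF A x] by simp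
  qed
  show "mat_kernel A \<subseteq> mat_kernel (transpose_mat A * A)"
    using mat_kernel_mult_subset[OF A, of "transpose_mat A" q] A by simp
qed

lemma sym_pd_trivial_kernel:
  assumes P: "P \<in> carrier_mat k k" and "sym_pd P"
  shows "trivial_kernel P"
  using assms by (intro trivial_kernelI[OF P]) (force simp: sym_pd_def)

lemma linear_coeff_zero_if_quadratic_nonneg:
  fixes b c :: real
  assumes "\<And>t. 0 \<le> c * t\<^sup>2 + b * t"
  shows "b = 0"
proof (rule ccontr)
  assume "b \<noteq> 0"
  define d where "d = \<bar>c\<bar> + 1"
  have d: "d > 0" "c - d < 0" by (auto simp: d_def)
  have "c * (- b / d)\<^sup>2 + b * (- b / d) = b\<^sup>2 / d\<^sup>2 * (c - d)"
    using d by (simp add: field_simps power2_eq_square)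
  also have "\<dots> < 0"
    using \<open>b \<noteq> 0\<close> d by (intro mult_pos_neg) auto
  finally show False using assms[of "- b / d"] by simp
qed

lemma sym_psd_quadratic_form_eq_0:
  assumes P: "P \<in> carrier_mat k k" and "sym_psd P"
    and x: "x \<in> carrier_vec k" and x0: "x \<bullet> (P *\<^sub>v x) = 0"
  shows "P *\<^sub>v x = 0\<^sub>v k"
proof -
  define y where "y = P *\<^sub>v x"
  have y: "y \<in> carrier_vec k" using P x by (simp add: y_def)
  have sym: "transpose_mat P = P" and psd: "\<And>z. z \<in> carrier_vec k \<Longrightarrow> 0 \<le> z \<bullet> (P *\<^sub>v z)"
    using assms(2) P by (auto simp: sym_psd_def)
  have expand: "(x + t \<cdot>\<^sub>v y) \<bullet> (P *\<^sub>v (x + t \<cdot>\<^sub>v y))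
      = (y \<bullet> (P *\<^sub>v y)) * t\<^sup>2 + 2 * (y \<bullet> y) * t" for t
  proof -
    have "x \<bullet> (P *\<^sub>v y) = y \<bullet> y"
      using sym_mat_bilinear_comm[OF P sym x y] by (simp add: y_def)
    then show ?thesis
      using P x y x0
      by (simp add: y_def[symmetric] mult_add_distrib_mat_vec mult_mat_vec add_scalar_prod_distrib
          scalar_prod_add_distrib[of _ k] power2_eq_square algebra_simps)
  qed
  have "0 \<le> (y \<bullet> (P *\<^sub>v y)) * t\<^sup>2 + 2 * (y \<bullet> y) * t" for t
    using psd[of "x + t \<cdot>\<^sub>v y"] x y by (simp add: expand)
  then have "y \<bullet> y = 0"
    using linear_coeff_zero_if_quadratic_nonneg[of "y \<bullet> (P *\<^sub>v y)" "2 * (y \<bullet> y)"] by simp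
  then show ?thesis using scalar_prod_self_eq_0_iff[OF y] by (simp add: y_def)
qed

lemma sym_pd_congruence:
  assumes P: "P \<in> carrier_mat k k" and psd: "sym_psd P" and X: "X \<in> carrier_mat k l"
    and ker: "trivial_kernel (P * X)"
  shows "sym_pd (transpose_mat X * P * X)"
proof -
  have P_sym: "transpose_mat P = P" using psd by (simp add: sym_psd_def)
  have form: "x \<bullet> ((transpose_mat X * P * X) *\<^sub>v x) = (X *\<^sub>v x) \<bullet> (P *\<^sub>v (X *\<^sub>v x))"
    if x: "x \<in> carrier_vec l" for x
  proof -
    have "(transpose_mat X * P * X) *\<^sub>v x = transpose_mat X *\<^sub>v (P *\<^sub>v (X *\<^sub>v x))"
      using assoc_mult_mat_vec[of "transpose_mat X * P" l k X l x]
        assoc_mult_mat_vec[of "transpose_mat X" l k P k "X *\<^sub>v x"] P X x by auto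
    then have "x \<bullet> ((transpose_mat X * P * X) *\<^sub>v x) = (transpose_mat X *\<^sub>v (P *\<^sub>v (X *\<^sub>v x))) \<bullet> x"
      using P X x by (simp add: comm_scalar_prod[OF x])
    also have "\<dots> = (P *\<^sub>v (X *\<^sub>v x)) \<bullet> (X *\<^sub>v x)"
      using P X x by (simp add: transpose_vec_mult_scalar[OF X x])
    finally show ?thesis using P X x by (simp add: comm_scalar_prod[of _ k])
  qed
  have "0 < x \<bullet> ((transpose_mat X * P * X) *\<^sub>v x)" if x: "x \<in> carrier_vec l" "x \<noteq> 0\<^sub>v l" for x
  proof -
    have "(X *\<^sub>v x) \<bullet> (P *\<^sub>v (X *\<^sub>v x)) \<noteq> 0"
      using sym_psd_quadratic_form_eq_0[OF P psd, of "X *\<^sub>v x"] trivial_kernelD[OF ker, of k l x] P X x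
      by auto
    moreover have "0 \<le> (X *\<^sub>v x) \<bullet> (P *\<^sub>v (X *\<^sub>v x))" using psd P X x by (simp add: sym_psd_def)
    ultimately show ?thesis using form[OF x(1)] by simp
  qed
  moreover have "transpose_mat (transpose_mat X * P * X) = transpose_mat X * P * X"
    using P X P_sym by (simp add: transpose_mult[of _ l k _ l] transpose_mult[of _ k k _ l])
  ultimately show ?thesis using P X by (auto simp: sym_pd_def)
qed

lemma sym_pd_pivot_split:
  fixes P :: "real mat"
  assumes P: "P \<in> carrier_mat (Suc k) (Suc k)" and pd: "sym_pd P"
  obtains a b D where "a > 0" "b \<in> carrier_mat 1 k" "D \<in> carrier_mat k k"
    "P = four_block_mat (a \<cdot>\<^sub>m 1\<^sub>m 1) b (transpose_mat b) D"
proof -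
  have P_sym: "P $$ (i, j) = P $$ (j, i)" if "i < Suc k" "j < Suc k" for i j
    using pd that P by (metis sym_pd_def index_transpose_mat(1) carrier_matD)
  define a where "a = P $$ (0, 0)"
  define b where "b = mat 1 k (\<lambda>(_, j). P $$ (0, Suc j))"
  define D where "D = mat k k (\<lambda>(i, j). P $$ (Suc i, Suc j))"
  have "0 < unit_vec (Suc k) 0 \<bullet> (P *\<^sub>v unit_vec (Suc k) 0)"
    using pd P unfolding sym_pd_def by (metis carrier_matD(2) unit_vec_carrier unit_vec_nonzero zero_less_Suc)
  then have "a > 0" using P by (simp add: a_def)
  moreover have "P = four_block_mat (a \<cdot>\<^sub>m 1\<^sub>m 1) b (transpose_mat b) D"
    using P P_sym by (intro eq_matI) (auto simp: a_def b_def D_def less_Suc_eq_0_disj)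
  ultimately show thesis by (intro that) (auto simp: b_def D_def)
qed

text \<open>The Schur complement of the pivot is \<open>X\<^sup>T P X\<close> for the injective \<open>X = [-b/a; I]\<close>.\<close>

lemma schur_complement_sym_pd:
  fixes a :: real
  assumes a: "a > 0" and b: "b \<in> carrier_mat 1 k" and D: "D \<in> carrier_mat k k"
    and pd: "sym_pd (four_block_mat (a \<cdot>\<^sub>m 1\<^sub>m 1) b (transpose_mat b) D)"
  shows "sym_pd (D - (1 / a) \<cdot>\<^sub>m (transpose_mat b * b))"
proof -
  define P where "P = four_block_mat (a \<cdot>\<^sub>m 1\<^sub>m 1) b (transpose_mat b) D"
  define X where "X = (- (1 / a)) \<cdot>\<^sub>m b @\<^sub>r 1\<^sub>m k"
  define S where "S = D - (1 / a) \<cdot>\<^sub>m (transpose_mat b * b)"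
  have P: "P \<in> carrier_mat (1 + k) (1 + k)"
    using four_block_carrier_mat[of "a \<cdot>\<^sub>m 1\<^sub>m 1" 1 1 D k k] D by (simp add: P_def)
  have S: "S \<in> carrier_mat k k"
    unfolding S_def using b by (intro minus_carrier_mat smult_carrier_mat mult_carrier_mat[of _ k 1]) auto
  have X: "X \<in> carrier_mat (1 + k) k"
    using carrier_append_rows[OF smult_carrier_mat[OF b] one_carrier_mat[of k]] by (simp add: X_def)
  have PX: "P * X = 0\<^sub>m 1 k @\<^sub>r S"
    unfolding P_def X_def S_def using a b D
    by (subst four_block_mult_append_rows[of _ 1 1 _ k _ k]) (auto simp: mult_smult_distrib)
  have "trivial_kernel X"
    using append_cols_mult_append_rows[of "0\<^sub>m k 1" k 1 "1\<^sub>m k" k "(- (1 / a)) \<cdot>\<^sub>m b" k "1\<^sub>m k"] b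
    by (intro trivial_kernel_if_left_inverse[OF X, of "append_cols (0\<^sub>m k 1) (1\<^sub>m k)"])
      (auto simp: X_def)
  have pdP: "sym_pd P" using pd by (simp add: P_def)
  then have "sym_psd P" using P by (auto simp: sym_pd_def sym_psd_def le_less)
  moreover have "trivial_kernel (P * X)"
    using sym_pd_trivial_kernel[OF P pdP] P X \<open>trivial_kernel X\<close> by (intro trivial_kernel_mult)
  ultimately have "sym_pd (transpose_mat X * P * X)" using P X by (intro sym_pd_congruence)
  moreover have "transpose_mat X * (P * X) = S"
  proof -
    have XT: "transpose_mat X = append_cols ((- (1 / a)) \<cdot>\<^sub>m transpose_mat b) (1\<^sub>m k)"
      unfolding X_def transpose_append_rows[OF smult_carrier_mat[OF b] one_carrier_mat]
      by (simp add: transpose_smult_mat)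
    show ?thesis unfolding PX XT using b S by (subst append_cols_mult_append_rows[of _ k 1 _ k]) auto
  qed
  ultimately show ?thesis using P X by (simp add: assoc_mult_mat[of _ k "1 + k" _ "1 + k"] S_def)
qed

lemma pivot_gram_factorization:
  fixes a :: real
  assumes a: "a > 0" and b: "b \<in> carrier_mat 1 k" and R': "R' \<in> carrier_mat k k"
  defines "R \<equiv> four_block_mat (sqrt a \<cdot>\<^sub>m 1\<^sub>m 1) ((1 / sqrt a) \<cdot>\<^sub>m b) (0\<^sub>m k 1) R'"
  shows "transpose_mat R * R = four_block_mat (a \<cdot>\<^sub>m 1\<^sub>m 1) b (transpose_mat b)
    ((1 / a) \<cdot>\<^sub>m (transpose_mat b * b) + transpose_mat R' * R')"
proof -
  have R1: "sqrt a \<cdot>\<^sub>m 1\<^sub>m 1 \<in> carrier_mat 1 1" and R2: "(1 / sqrt a) \<cdot>\<^sub>m b \<in> carrier_mat 1 k"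
    using b by auto
  have "transpose_mat R = four_block_mat (sqrt a \<cdot>\<^sub>m 1\<^sub>m 1) (0\<^sub>m 1 k)
      ((1 / sqrt a) \<cdot>\<^sub>m transpose_mat b) (transpose_mat R')"
    using transpose_four_block_mat[OF R1 R2 zero_carrier_mat R'] by (simp add: R_def transpose_smult_mat)
  then have "transpose_mat R * R = four_block_mat
      (sqrt a \<cdot>\<^sub>m 1\<^sub>m 1 * (sqrt a \<cdot>\<^sub>m 1\<^sub>m 1) + 0\<^sub>m 1 k * 0\<^sub>m k 1)
      (sqrt a \<cdot>\<^sub>m 1\<^sub>m 1 * ((1 / sqrt a) \<cdot>\<^sub>m b) + 0\<^sub>m 1 k * R')
      ((1 / sqrt a) \<cdot>\<^sub>m transpose_mat b * (sqrt a \<cdot>\<^sub>m 1\<^sub>m 1) + transpose_mat R' * 0\<^sub>m k 1)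
      ((1 / sqrt a) \<cdot>\<^sub>m transpose_mat b * ((1 / sqrt a) \<cdot>\<^sub>m b) + transpose_mat R' * R')"
    unfolding R_def using R1 R2 R' b by (simp only:) (rule mult_four_block_mat; auto)
  also have "\<dots> = four_block_mat (a \<cdot>\<^sub>m 1\<^sub>m 1) b (transpose_mat b)
      ((1 / a) \<cdot>\<^sub>m (transpose_mat b * b) + transpose_mat R' * R')"
    using a b R' by (intro cong_four_block_mat eq_matI) (auto simp: scalar_prod_def sum_distrib_left)
  finally show ?thesis .
qed

lemma cholesky_factorization:
  fixes P :: "real mat"
  assumes "P \<in> carrier_mat k k" "sym_pd P"
  shows "\<exists>R \<in> carrier_mat k k. P = transpose_mat R * R"
  using assms
proof (induction k arbitrary: P)
  case 0
  then show ?case by (intro bexI[of _ "1\<^sub>m 0"] eq_matI) auto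
next
  case (Suc k)
  obtain a b D where a: "a > 0" and b: "b \<in> carrier_mat 1 k" and D: "D \<in> carrier_mat k k"
    and P: "P = four_block_mat (a \<cdot>\<^sub>m 1\<^sub>m 1) b (transpose_mat b) D"
    by (rule sym_pd_pivot_split[OF Suc.prems])
  define S where "S = D - (1 / a) \<cdot>\<^sub>m (transpose_mat b * b)"
  have S: "S \<in> carrier_mat k k"
    unfolding S_def using b by (intro minus_carrier_mat smult_carrier_mat mult_carrier_mat[of _ k 1]) auto
  obtain R' where R': "R' \<in> carrier_mat k k" "S = transpose_mat R' * R'"
    using Suc.IH[OF S] schur_complement_sym_pd[OF a b D] Suc.prems(2) P by (auto simp: S_def)
  have "D = (1 / a) \<cdot>\<^sub>m (transpose_mat b * b) + transpose_mat R' * R'"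
    unfolding R'(2)[symmetric] S_def using D b by (intro eq_matI) auto
  then have "P = transpose_mat (four_block_mat (sqrt a \<cdot>\<^sub>m 1\<^sub>m 1) ((1 / sqrt a) \<cdot>\<^sub>m b) (0\<^sub>m k 1) R')
      * four_block_mat (sqrt a \<cdot>\<^sub>m 1\<^sub>m 1) ((1 / sqrt a) \<cdot>\<^sub>m b) (0\<^sub>m k 1) R'"
    using pivot_gram_factorization[OF a b R'(1)] P by simp
  moreover have "four_block_mat (sqrt a \<cdot>\<^sub>m 1\<^sub>m 1) ((1 / sqrt a) \<cdot>\<^sub>m b) (0\<^sub>m k 1) R'
      \<in> carrier_mat (Suc k) (Suc k)"
    using four_block_carrier_mat[of "sqrt a \<cdot>\<^sub>m 1\<^sub>m 1" 1 1 R' k k] R'(1) by simp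
  ultimately show ?case by (rule bexI)
qed

lemma cholesky_factorization_invertible:
  fixes P :: "real mat"
  assumes P: "P \<in> carrier_mat k k" and "sym_pd P"
  obtains R where "R \<in> carrier_mat k k" "invertible_mat R" "P = transpose_mat R * R"
proof -
  from cholesky_factorization[OF assms]
  obtain R where R: "R \<in> carrier_mat k k" and PR: "P = transpose_mat R * R" by (rule bexE)
  have "trivial_kernel (transpose_mat R * R)" using sym_pd_trivial_kernel[OF assms] PR by simp
  then have "trivial_kernel R" using trivial_kernel_of_mult[of "transpose_mat R" k k R k] R by simp
  then have "invertible_mat R" using invertible_mat_iff_trivial_kernel[OF R] by blast
  from R this PR show thesis by (rule that)
qed

section \<open>Orthonormal bases and orthogonal splittings\<close>

lemma kernel_basis_mat_exists:
  assumes A: "(A :: 'a :: field mat) \<in> carrier_mat p q"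
  obtains k K where "K \<in> carrier_mat q k" "trivial_kernel K" "A * K = 0\<^sub>m p k"
    "mat_kernel A \<subseteq> (\<lambda>y. K *\<^sub>v y) ` carrier_vec k"
proof -
  interpret kernel p q A by unfold_locales (rule A)
  obtain Bs where fin: "finite Bs" and bas: "basis Bs" using kernel_basis_exists[OF A] by auto
  have Bs: "Bs \<subseteq> mat_kernel A" "\<not> NC.lin_dep Bs" "NC.span Bs = mat_kernel A"
    using bas unfolding Ker.basis_def using lindep_same span_same by auto
  obtain ws where ws: "set ws = Bs" "distinct ws" using finite_distinct_list[OF fin] by auto
  define K where "K = mat_of_cols q ws"
  have K: "K \<in> carrier_mat q (length ws)" by (simp add: K_def)
  have cols: "cols K = ws"
    using ws Bs(1) mat_kernel_carrier[OF A] unfolding K_def by (intro cols_mat_of_cols) auto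
  have "mat_kernel A = NC.col_space K"
    using Bs(3) ws(1) by (simp add: NC.col_space_def cols)
  also have "\<dots> = {y \<in> carrier_vec q. \<exists>x \<in> carrier_vec (length ws). K *\<^sub>v x = y}"
    using K by (simp add: NC.col_space_eq[OF K])
  finally have range: "mat_kernel A = (\<lambda>y. K *\<^sub>v y) ` carrier_vec (length ws)"
    using K by auto
  have "trivial_kernel K"
    using NC.lin_depI[OF K] Bs(2) ws cols by (intro trivial_kernelI[OF K]) auto
  moreover have "A * K = 0\<^sub>m p (length ws)"
    using range K by (intro mult_eq_0_if_range_in_kernel[OF A K]) auto
  moreover have "mat_kernel A \<subseteq> (\<lambda>y. K *\<^sub>v y) ` carrier_vec (length ws)" using range by simp
  ultimately show thesis by (rule that[OF K])
qed

lemma orthonormal_kernel_basis_exists: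
  assumes A: "(A :: real mat) \<in> carrier_mat p q"
  obtains k K where "K \<in> carrier_mat q k" "transpose_mat K * K = 1\<^sub>m k" "A * K = 0\<^sub>m p k"
    "mat_kernel A \<subseteq> (\<lambda>y. K *\<^sub>v y) ` carrier_vec k"
proof -
  obtain k K0 where K0: "K0 \<in> carrier_mat q k" "trivial_kernel K0" "A * K0 = 0\<^sub>m p k"
    and range: "mat_kernel A \<subseteq> (\<lambda>y. K0 *\<^sub>v y) ` carrier_vec k"
    by (rule kernel_basis_mat_exists[OF A])
  have "transpose_mat K0 * K0 \<in> carrier_mat k k" using K0 by simp
  then obtain R where R: "R \<in> carrier_mat k k" "invertible_mat R"
    and gram: "transpose_mat K0 * K0 = transpose_mat R * R"
    by (rule cholesky_factorization_invertible[OF _ sym_pd_gram[OF K0(1,2)]])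
  obtain Ri where Ri: "Ri \<in> carrier_mat k k" "R * Ri = 1\<^sub>m k" "Ri * R = 1\<^sub>m k"
    by (rule invertible_matE[OF R])
  define K where "K = K0 * Ri"
  have K: "K \<in> carrier_mat q k" using K0 Ri by (simp add: K_def)
  note dims = carrier_matD[OF K0(1)] carrier_matD[OF R(1)] carrier_matD[OF Ri(1)]
  have "transpose_mat K * K = transpose_mat Ri * (transpose_mat K0 * K0) * Ri"
    by (simp add: K_def dims transpose_mult_dims assoc_mult_mat_dims)
  also have "\<dots> = transpose_mat (R * Ri) * (R * Ri)"
    unfolding gram by (simp add: dims transpose_mult_dims assoc_mult_mat_dims)
  finally have "transpose_mat K * K = 1\<^sub>m k" using Ri by simp
  moreover have "A * K = 0\<^sub>m p k"
    using A K0 Ri by (simp add: K_def assoc_mult_mat[symmetric, of _ p q _ k])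
  moreover have "mat_kernel A \<subseteq> (\<lambda>y. K *\<^sub>v y) ` carrier_vec k"
  proof
    fix x assume "x \<in> mat_kernel A"
    then obtain y where y: "y \<in> carrier_vec k" and x: "x = K0 *\<^sub>v y" using range by auto
    have "Ri *\<^sub>v (R *\<^sub>v y) = y" using assoc_mult_mat_vec[OF Ri(1) R(1) y] Ri(3) y by simp
    then have "K *\<^sub>v (R *\<^sub>v y) = x" using K0 Ri R y x by (simp add: K_def)
    then show "x \<in> (\<lambda>y. K *\<^sub>v y) ` carrier_vec k" using R y by (auto intro!: image_eqI)
  qed
  ultimately show thesis by (rule that[OF K])
qed

lemma real_orth_append_cols:
  assumes V1: "V1 \<in> carrier_mat q d" and V2: "V2 \<in> carrier_mat q e" and "d + e = q"
    and "transpose_mat V1 * V1 = 1\<^sub>m d" "transpose_mat V2 * V2 = 1\<^sub>m e"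
    and "transpose_mat V1 * V2 = 0\<^sub>m d e"
  shows "real_orth (append_cols V1 V2)"
proof -
  have "transpose_mat V2 * V1 = 0\<^sub>m e d"
    using arg_cong[OF assms(6), of transpose_mat] V1 V2 by (simp add: transpose_mult[of _ d q])
  then show ?thesis
    using assms by (simp add: real_orth_def transpose_append_cols append_rows_mult_append_cols[of _ d q _ e])
qed

lemma real_orth_invertible:
  assumes V: "V \<in> carrier_mat n n" and "real_orth V"
  shows "invertible_mat V"
  using assms trivial_kernel_if_left_inverse[OF V, of "transpose_mat V"]
  by (simp add: real_orth_def invertible_mat_iff_trivial_kernel[OF V])

lemma orthonormal_complement_exists:
  assumes X: "(X :: real mat) \<in> carrier_mat q k" and X_ker: "trivial_kernel X"
  obtains L where "k \<le> q" "L \<in> carrier_mat q (q - k)" "transpose_mat L * L = 1\<^sub>m (q - k)"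
    "transpose_mat X * L = 0\<^sub>m k (q - k)"
proof -
  have XT: "transpose_mat X \<in> carrier_mat k q" using X by simp
  obtain l L where L: "L \<in> carrier_mat q l" "transpose_mat L * L = 1\<^sub>m l" "transpose_mat X * L = 0\<^sub>m k l"
    and range: "mat_kernel (transpose_mat X) \<subseteq> (\<lambda>y. L *\<^sub>v y) ` carrier_vec l"
    by (rule orthonormal_kernel_basis_exists[OF XT])
  define Q where "Q = append_cols L X"
  have Q: "Q \<in> carrier_mat q (l + k)" using L X by (simp add: Q_def)
  have "trivial_kernel Q"
    unfolding Q_def
    using sym_pd_trivial_kernel[of "transpose_mat X * X" k, OF _ sym_pd_gram[OF X X_ker]]
      trivial_kernel_if_left_inverse[OF L(1) _ L(2)] X L
    by (intro trivial_kernel_append_cols[OF L(1) X XT L(3)]) auto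
  then have le1: "l + k \<le> q" using trivial_kernel_dim_le[OF Q] by simp
  have QT: "transpose_mat Q \<in> carrier_mat (l + k) q" using Q by simp
  have "trivial_kernel (transpose_mat Q)"
  proof (rule trivial_kernelI[OF QT])
    fix z :: "real vec" assume z: "z \<in> carrier_vec q" and "transpose_mat Q *\<^sub>v z = 0\<^sub>v (l + k)"
    then have "(transpose_mat L *\<^sub>v z) @\<^sub>v (transpose_mat X *\<^sub>v z) = 0\<^sub>v l @\<^sub>v 0\<^sub>v k"
      using L X by (simp add: Q_def transpose_append_cols mat_mult_append[of _ l q _ k] zero_vec_append)
    then have Lz: "transpose_mat L *\<^sub>v z = 0\<^sub>v l" and Xz: "transpose_mat X *\<^sub>v z = 0\<^sub>v k"
      using L X z by (auto simp: append_vec_eq[of _ l])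
    have "z \<in> mat_kernel (transpose_mat X)" using mat_kernelI[OF XT z Xz] .
    then obtain y where y: "y \<in> carrier_vec l" and zy: "z = L *\<^sub>v y" using range by auto
    have "y = transpose_mat L *\<^sub>v z"
      using assoc_mult_mat_vec[of "transpose_mat L" l q L l y] L y zy by simp
    then have "y = 0\<^sub>v l" using Lz by simp
    then show "z = 0\<^sub>v q" using zy L by simp
  qed
  then have "q \<le> l + k" using trivial_kernel_dim_le[OF QT] by simp
  then have "l = q - k" "k \<le> q" using le1 by auto
  with L show thesis by (intro that) auto
qed

lemma orthogonal_splitting_exists:
  assumes A: "(A :: real mat) \<in> carrier_mat p q"
  obtains d V1 V2 where "d \<le> q" "V1 \<in> carrier_mat q d" "V2 \<in> carrier_mat q (q - d)"
    "real_orth (append_cols V1 V2)" "A * V2 = 0\<^sub>m p (q - d)" "trivial_kernel (A * V1)"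
proof -
  obtain k K where K: "K \<in> carrier_mat q k" "transpose_mat K * K = 1\<^sub>m k" "A * K = 0\<^sub>m p k"
    and range: "mat_kernel A \<subseteq> (\<lambda>y. K *\<^sub>v y) ` carrier_vec k"
    by (rule orthonormal_kernel_basis_exists[OF A])
  have "trivial_kernel K" by (rule trivial_kernel_if_left_inverse[OF K(1) _ K(2)]) (use K(1) in simp)
  then obtain L where kq: "k \<le> q" and L: "L \<in> carrier_mat q (q - k)"
    "transpose_mat L * L = 1\<^sub>m (q - k)" "transpose_mat K * L = 0\<^sub>m k (q - k)"
    by (rule orthonormal_complement_exists[OF K(1)])
  have LK: "transpose_mat L * K = 0\<^sub>m (q - k) k"
    using arg_cong[OF L(3), of transpose_mat] K(1) L(1) by (simp add: transpose_mult_dims)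
  have "trivial_kernel (A * L)"
  proof (rule trivial_kernelI)
    fix x assume x: "x \<in> carrier_vec (q - k)" and "(A * L) *\<^sub>v x = 0\<^sub>v p"
    then have "L *\<^sub>v x \<in> mat_kernel A" using A L by (auto intro: mat_kernelI)
    then obtain y where y: "y \<in> carrier_vec k" and Lx: "L *\<^sub>v x = K *\<^sub>v y" using range by auto
    have "x = transpose_mat L *\<^sub>v (L *\<^sub>v x)"
      using assoc_mult_mat_vec[of "transpose_mat L" "q - k" q L "q - k" x] L x by simp
    also have "\<dots> = (transpose_mat L * K) *\<^sub>v y" using Lx L K y by simp
    finally show "x = 0\<^sub>v (q - k)" using LK y by simp
  qed (use A L in auto)
  moreover have "real_orth (append_cols L K)"
    using kq L K LK by (intro real_orth_append_cols[OF L(1) K(1)]) auto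
  moreover have "K \<in> carrier_mat q (q - (q - k))" using K kq by simp
  ultimately show thesis using K(3) kq L(1) by (intro that[of "q - k" L K]) auto
qed

lemma left_annihilator_exists:
  assumes B1: "(B1 :: real mat) \<in> carrier_mat n r" and "trivial_kernel B1"
  obtains N where "N \<in> carrier_mat n (n - r)" "trivial_kernel N" "transpose_mat N * B1 = 0\<^sub>m (n - r) r"
proof -
  obtain L where L: "L \<in> carrier_mat n (n - r)" "transpose_mat L * L = 1\<^sub>m (n - r)"
    "transpose_mat B1 * L = 0\<^sub>m r (n - r)"
    by (rule orthonormal_complement_exists[OF assms])
  have "transpose_mat L * B1 = 0\<^sub>m (n - r) r"
    using arg_cong[OF L(3), of transpose_mat] B1 L(1) by (simp add: transpose_mult_dims)
  moreover have "trivial_kernel L" by (rule trivial_kernel_if_left_inverse[OF L(1) _ L(2)]) (use L in simp)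
  ultimately show thesis using L(1) by (intro that)
qed

lemma mrank_eq_if_split:
  assumes A: "A \<in> carrier_mat p q" and V1: "V1 \<in> carrier_mat q d" and V2: "V2 \<in> carrier_mat q (q - d)"
    and "d \<le> q" and "invertible_mat (append_cols V1 V2)"
    and "A * V2 = 0\<^sub>m p (q - d)" and "trivial_kernel (A * V1)"
  shows "mrank A = d"
proof -
  have V: "append_cols V1 V2 \<in> carrier_mat q q" using V1 V2 \<open>d \<le> q\<close> append_cols_carrier[OF V1 V2] by simp
  have "mrank A = mrank (A * V1)"
    using mrank_eq_first_block[OF A V assms(5), of "A * V1" d] mult_append_cols[OF A V1 V2] assms(6) A V1 by simp
  then show ?thesis using mrank_eq_dim_col_iff[of "A * V1" p d] assms(7) A V1 by simp
qed

lemma mrank_eq_if_mat_kernel_eq: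
  assumes A: "A \<in> carrier_mat p q" and A': "A' \<in> carrier_mat p' q"
    and ker: "mat_kernel A = mat_kernel A'"
  shows "mrank A = mrank A'"
proof -
  obtain d V1 V2 where V: "d \<le> q" "V1 \<in> carrier_mat q d" "V2 \<in> carrier_mat q (q - d)"
    "real_orth (append_cols V1 V2)" "A * V2 = 0\<^sub>m p (q - d)" "trivial_kernel (A * V1)"
    by (rule orthogonal_splitting_exists[OF A])
  have inv: "invertible_mat (append_cols V1 V2)"
    using real_orth_invertible[of _ q] V append_cols_carrier[OF V(2,3)] by simp
  have "A' * V2 = 0\<^sub>m p' (q - d)"
    using mult_eq_0_if_mat_kernel_subset[OF A A' V(3) V(5)] ker by simp
  moreover have "trivial_kernel (A' * V1)"
    using trivial_kernel_mult_if_mat_kernel_subset[OF A A' V(2) V(6)] ker by simp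
  ultimately have "mrank A' = d" using mrank_eq_if_split[OF A' V(2,3,1) inv] by simp
  moreover have "mrank A = d" using mrank_eq_if_split[OF A V(2,3,1) inv V(5,6)] .
  ultimately show ?thesis by simp
qed

lemma orthogonal_block_factorization:
  assumes S1: "(S1 :: real mat) \<in> carrier_mat (a + b) a" and S2: "S2 \<in> carrier_mat (a + b) b"
    and ker: "trivial_kernel S1" and S22: "transpose_mat S2 * S2 = 1\<^sub>m b"
    and S12: "transpose_mat S1 * S2 = 0\<^sub>m a b"
  obtains U Z where "U \<in> carrier_mat (a + b) (a + b)" "real_orth U" "Z \<in> carrier_mat a a"
    "invertible_mat Z" "append_cols S1 S2 = U * four_block_mat Z (0\<^sub>m a b) (0\<^sub>m b a) (1\<^sub>m b)"
proof -
  have "transpose_mat S1 * S1 \<in> carrier_mat a a" using S1 by simp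
  then obtain Z where Z: "Z \<in> carrier_mat a a" "invertible_mat Z"
    and gram: "transpose_mat S1 * S1 = transpose_mat Z * Z"
    by (rule cholesky_factorization_invertible[OF _ sym_pd_gram[OF S1 ker]])
  obtain Zi where Zi: "Zi \<in> carrier_mat a a" "Z * Zi = 1\<^sub>m a" "Zi * Z = 1\<^sub>m a"
    by (rule invertible_matE[OF Z])
  note dims = carrier_matD[OF S1] carrier_matD[OF S2] carrier_matD[OF Z(1)] carrier_matD[OF Zi(1)]
  define U where "U = append_cols (S1 * Zi) S2"
  have U: "U \<in> carrier_mat (a + b) (a + b)" using S1 S2 Zi by (simp add: U_def)
  have "transpose_mat (S1 * Zi) * (S1 * Zi) = transpose_mat Zi * (transpose_mat S1 * S1) * Zi"
    by (simp add: transpose_mult_dims assoc_mult_mat_dims dims)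
  also have "\<dots> = transpose_mat (Z * Zi) * (Z * Zi)"
    by (simp add: gram transpose_mult_dims assoc_mult_mat_dims dims)
  finally have "transpose_mat (S1 * Zi) * (S1 * Zi) = 1\<^sub>m a" using Zi(2) by simp
  moreover have "transpose_mat (S1 * Zi) * S2 = 0\<^sub>m a b"
  proof -
    have "transpose_mat (S1 * Zi) * S2 = transpose_mat Zi * (transpose_mat S1 * S2)"
      by (simp add: transpose_mult_dims assoc_mult_mat_dims dims)
    then show ?thesis using S12 Zi(1) by simp
  qed
  ultimately have "real_orth U"
    unfolding U_def using S1 S2 Zi S22 by (intro real_orth_append_cols[of _ "a + b" a _ b]) auto
  moreover have "U * four_block_mat Z (0\<^sub>m a b) (0\<^sub>m b a) (1\<^sub>m b) = append_cols S1 S2"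
  proof -
    have "U * four_block_mat Z (0\<^sub>m a b) (0\<^sub>m b a) (1\<^sub>m b)
        = append_cols (S1 * Zi * Z + S2 * 0\<^sub>m b a) (S1 * Zi * 0\<^sub>m a b + S2 * 1\<^sub>m b)"
      unfolding U_def using S1 S2 Z Zi by (intro append_cols_mult_four_block[of _ a a]) auto
    also have "S1 * Zi * Z = S1" using Zi(3) S1 by (simp add: assoc_mult_mat_dims dims)
    finally show ?thesis using S1 S2 Zi(1) by simp
  qed
  ultimately show thesis using U Z by (intro that) auto
qed

section \<open>Solutions of \<open>(T B)\<^sup>T = C T\<^sup>-\<^sup>1\<close>\<close>

lemma inv_cond_iff:
  assumes T: "T \<in> carrier_mat n n" and B: "B \<in> carrier_mat n m" and C: "C \<in> carrier_mat m n"
  shows "inv_cond T B C \<longleftrightarrow> invertible_mat T \<and> transpose_mat T * T * B = transpose_mat C"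
proof
  assume "inv_cond T B C"
  then obtain Ti where TTi: "T * Ti = 1\<^sub>m n" and TiT: "Ti * T = 1\<^sub>m (dim_row Ti)"
    and eq: "transpose_mat (T * B) = C * Ti"
    using T unfolding inv_cond_def inverts_mat_def by auto
  have Ti: "Ti \<in> carrier_mat n n"
    using arg_cong[OF TTi, of dim_col] arg_cong[OF TiT, of dim_col] T by auto
  note dims = carrier_matD[OF T] carrier_matD[OF Ti] carrier_matD[OF B] carrier_matD[OF C]
  have "invertible_mat T" using T Ti TTi TiT by (intro invertible_matI) auto
  moreover have "C = transpose_mat B * transpose_mat T * T"
  proof -
    have "C = C * Ti * T" using TiT C Ti by (simp add: assoc_mult_mat_dims dims)
    then show ?thesis by (simp add: eq[symmetric] transpose_mult_dims dims)
  qed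
  then have "transpose_mat T * T * B = transpose_mat C"
    by (simp add: transpose_mult_dims assoc_mult_mat_dims dims)
  ultimately show "invertible_mat T \<and> transpose_mat T * T * B = transpose_mat C" by simp
next
  assume "invertible_mat T \<and> transpose_mat T * T * B = transpose_mat C"
  then have inv: "invertible_mat T" and eq: "transpose_mat T * T * B = transpose_mat C" by auto
  obtain Ti where Ti: "Ti \<in> carrier_mat n n" "T * Ti = 1\<^sub>m n" "Ti * T = 1\<^sub>m n"
    by (rule invertible_matE[OF T inv])
  note dims = carrier_matD[OF T] carrier_matD[OF Ti(1)] carrier_matD[OF B] carrier_matD[OF C]
  have C_eq: "C = transpose_mat B * (transpose_mat T * T)"
    using arg_cong[OF eq, of transpose_mat] by (simp add: transpose_mult_dims assoc_mult_mat_dims dims)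
  have "transpose_mat (T * B) = transpose_mat B * transpose_mat T * (T * Ti)"
    using Ti(2) B T by (simp add: transpose_mult_dims dims)
  also have "\<dots> = C * Ti" unfolding C_eq by (simp add: assoc_mult_mat_dims dims)
  finally have "transpose_mat (T * B) = C * Ti" .
  then show "inv_cond T B C"
    unfolding inv_cond_def inverts_mat_def using T Ti by auto
qed

lemma kernel_rank_psd_if_solution:
  assumes B: "B \<in> carrier_mat n m" and C: "C \<in> carrier_mat m n" and T: "T \<in> carrier_mat n n"
    and sol: "inv_cond T B C"
  shows "mat_kernel (transpose_mat C) = mat_kernel B" "mrank (C * B) = mrank B" "sym_psd (C * B)"
proof -
  have inv: "invertible_mat T" and eq: "transpose_mat T * T * B = transpose_mat C"
    using sol inv_cond_iff[OF T B C] by auto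
  obtain Ti where Ti: "Ti \<in> carrier_mat n n" "T * Ti = 1\<^sub>m n" "Ti * T = 1\<^sub>m n"
    by (rule invertible_matE[OF T inv])
  note dims = carrier_matD[OF T] carrier_matD[OF Ti(1)] carrier_matD[OF B] carrier_matD[OF C]
  have C_eq: "C = transpose_mat B * (transpose_mat T * T)"
    using arg_cong[OF eq, of transpose_mat] by (simp add: transpose_mult_dims assoc_mult_mat_dims dims)
  have CB: "C * B = transpose_mat (T * B) * (T * B)"
    unfolding C_eq by (simp add: transpose_mult_dims assoc_mult_mat_dims dims)
  have kerTB: "mat_kernel (T * B) = mat_kernel B"
    using mat_kernel_mult_eq[OF B T Ti(1,3)] .
  have "Ti * transpose_mat Ti * (transpose_mat T * T) = 1\<^sub>m n"
  proof -
    have "Ti * transpose_mat Ti * (transpose_mat T * T) = Ti * (transpose_mat (T * Ti) * T)"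
      by (simp add: transpose_mult_dims assoc_mult_mat_dims dims)
    then show ?thesis using Ti T by simp
  qed
  then have "mat_kernel (transpose_mat T * T * B) = mat_kernel B"
    using mat_kernel_mult_eq[OF B, of "transpose_mat T * T" "Ti * transpose_mat Ti"] T Ti(1)
    by (simp add: assoc_mult_mat_dims dims)
  then show "mat_kernel (transpose_mat C) = mat_kernel B" by (simp add: eq)
  have "mat_kernel (C * B) = mat_kernel B"
    unfolding CB using mat_kernel_gram[of "T * B" n m] T B kerTB by simp
  then show "mrank (C * B) = mrank B" using C B by (intro mrank_eq_if_mat_kernel_eq[of _ m m _ n]) auto
  show "sym_psd (C * B)" unfolding CB using T B by (intro sym_psd_gram[of _ n m]) auto
qed

lemma split_condI:
  assumes B1: "B1 \<in> carrier_mat n r" and C1: "C1 \<in> carrier_mat r n"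
    and "B * V = append_cols B1 (0\<^sub>m n (m - r))"
    and "transpose_mat C * V = append_cols (transpose_mat C1) (0\<^sub>m n (m - r))"
    and "trivial_kernel B1" "trivial_kernel (transpose_mat C1)" and pd: "sym_pd (C1 * B1)"
  shows "\<exists>Y. split_cond n m r B C V B1 C1 Y"
proof -
  have "C1 * B1 \<in> carrier_mat r r" using C1 B1 by simp
  then obtain R where R: "R \<in> carrier_mat r r" "invertible_mat R" and "C1 * B1 = transpose_mat R * R"
    by (rule cholesky_factorization_invertible[OF _ pd])
  then have "split_cond n m r B C V B1 C1 (transpose_mat R)"
    unfolding split_cond_def
    using assms invertible_mat_transpose[OF R] mrank_eq_dim_col_iff[OF B1]
      mrank_eq_dim_col_iff[of "transpose_mat C1" n r]
    by auto
  then show ?thesis ..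
qed

lemma split_cond_if_kernel_rank_psd:
  assumes B: "B \<in> carrier_mat n m" and C: "C \<in> carrier_mat m n" and rk: "mrank B = r"
    and ker: "mat_kernel (transpose_mat C) = mat_kernel B" and rkCB: "mrank (C * B) = r"
    and psd: "sym_psd (C * B)"
  shows "\<exists>V \<in> carrier_mat m m. real_orth V \<and> (\<exists>B1 C1 Y. split_cond n m r B C V B1 C1 Y)"
proof -
  obtain d V1 V2 where V: "d \<le> m" "V1 \<in> carrier_mat m d" "V2 \<in> carrier_mat m (m - d)"
    "real_orth (append_cols V1 V2)" "B * V2 = 0\<^sub>m n (m - d)" "trivial_kernel (B * V1)"
    by (rule orthogonal_splitting_exists[OF B])
  define V where "V = append_cols V1 V2"
  have Vc: "V \<in> carrier_mat m m" using append_cols_carrier[OF V(2,3)] V(1) by (simp add: V_def)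
  have inv: "invertible_mat V" using real_orth_invertible[OF Vc] V(4) by (simp add: V_def)
  have r: "d = r" using mrank_eq_if_split[OF B V(2,3,1) inv[unfolded V_def] V(5,6)] rk by simp
  define B1 C1 where "B1 = B * V1" and "C1 = transpose_mat V1 * C"
  have CT: "transpose_mat C \<in> carrier_mat n m" using C by simp
  have B1: "B1 \<in> carrier_mat n r" and C1: "C1 \<in> carrier_mat r n"
    using B C V r by (auto simp: B1_def C1_def)
  note dims = carrier_matD[OF B] carrier_matD[OF C] carrier_matD[OF V(2)] carrier_matD[OF Vc]
  have C1T: "transpose_mat C1 = transpose_mat C * V1" by (simp add: C1_def transpose_mult_dims dims)
  have BV: "B * V = append_cols B1 (0\<^sub>m n (m - r))"
    using mult_append_cols[OF B V(2,3)] V(5) r by (simp add: V_def B1_def)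
  have CV: "transpose_mat C * V = append_cols (transpose_mat C1) (0\<^sub>m n (m - r))"
    using mult_append_cols[OF CT V(2,3)] mult_eq_0_if_mat_kernel_subset[OF B CT V(3,5)] ker r C1T
    by (simp add: V_def)
  have B1_ker: "trivial_kernel B1" using V(6) by (simp add: B1_def)
  have C1T_ker: "trivial_kernel (transpose_mat C1)"
    using trivial_kernel_mult_if_mat_kernel_subset[OF B CT V(2,6)] ker C1T by simp
  have CB1: "C * B1 \<in> carrier_mat m r" using C B1 by simp
  have "C * B * V = append_cols (C * B1) (0\<^sub>m m (m - r))"
    using mult_append_cols[OF C B1, of "0\<^sub>m n (m - r)" "m - r"] BV C
    by (simp add: assoc_mult_mat_dims dims)
  then have "mrank (C * B1) = r" using mrank_eq_first_block[of "C * B" m m V, OF _ Vc inv CB1] rkCB C B by simp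
  then have CB1_ker: "trivial_kernel (C * B1)" using mrank_eq_dim_col_iff[OF CB1] by simp
  have "sym_pd (transpose_mat V1 * (C * B) * V1)"
    using CB1_ker C B V(2) psd
    by (intro sym_pd_congruence[of _ m _ r]) (auto simp: B1_def assoc_mult_mat_dims dims r)
  then have "sym_pd (C1 * B1)" by (simp add: C1_def B1_def assoc_mult_mat_dims dims)
  then have "\<exists>Y. split_cond n m r B C V B1 C1 Y"
    using split_condI[OF B1 C1 BV CV B1_ker C1T_ker] by blast
  then show ?thesis using Vc V(4) by (auto simp: V_def)
qed

lemma split_cond_dims:
  assumes B: "B \<in> carrier_mat n m" and V: "V \<in> carrier_mat m m"
    and sc: "split_cond n m r B C V B1 C1 Y"
  shows "r \<le> m" "r \<le> n" "trivial_kernel B1"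
proof -
  have B1: "B1 \<in> carrier_mat n r" and BV: "B * V = append_cols B1 (0\<^sub>m n (m - r))"
    and "mrank B1 = r"
    using sc by (auto simp: split_cond_def)
  have "r + (m - r) = m" using arg_cong[OF BV, of dim_col] B1 B V by simp
  then show "r \<le> m" by simp
  show "trivial_kernel B1" using mrank_eq_dim_col_iff[OF B1] \<open>mrank B1 = r\<close> by simp
  then show "r \<le> n" using trivial_kernel_dim_le[OF B1] by simp
qed

lemma split_cond_first_block:
  assumes B: "B \<in> carrier_mat n m" and C: "C \<in> carrier_mat m n" and V: "V \<in> carrier_mat m m"
    and sc: "split_cond n m r B C V B1 C1 Y"
  shows "B1 = B * V * (1\<^sub>m r @\<^sub>r 0\<^sub>m (m - r) r)"
    "transpose_mat C1 = transpose_mat C * V * (1\<^sub>m r @\<^sub>r 0\<^sub>m (m - r) r)"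
proof -
  have B1: "B1 \<in> carrier_mat n r" and C1: "C1 \<in> carrier_mat r n"
    and BV: "B * V = append_cols B1 (0\<^sub>m n (m - r))"
    and CV: "transpose_mat C * V = append_cols (transpose_mat C1) (0\<^sub>m n (m - r))"
    using sc by (auto simp: split_cond_def)
  have first: "append_cols X (0\<^sub>m n (m - r)) * (1\<^sub>m r @\<^sub>r 0\<^sub>m (m - r) r) = X" if "X \<in> carrier_mat n r" for X
    using append_cols_mult_append_rows[OF that, of "0\<^sub>m n (m - r)" "m - r" "1\<^sub>m r" r "0\<^sub>m (m - r) r"] that
    by simp
  show "B1 = B * V * (1\<^sub>m r @\<^sub>r 0\<^sub>m (m - r) r)" unfolding BV using first[OF B1] by simp
  show "transpose_mat C1 = transpose_mat C * V * (1\<^sub>m r @\<^sub>r 0\<^sub>m (m - r) r)"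
    unfolding CV using first[of "transpose_mat C1"] C1 by simp
qed

lemma solution_iff_split:
  assumes B: "B \<in> carrier_mat n m" and C: "C \<in> carrier_mat m n" and M: "M \<in> carrier_mat n n"
    and V: "V \<in> carrier_mat m m" "invertible_mat V" and sc: "split_cond n m r B C V B1 C1 Y"
  shows "M * B = transpose_mat C \<longleftrightarrow> M * B1 = transpose_mat C1"
proof -
  have B1: "B1 \<in> carrier_mat n r"
    and BV: "B * V = append_cols B1 (0\<^sub>m n (m - r))"
    and CV: "transpose_mat C * V = append_cols (transpose_mat C1) (0\<^sub>m n (m - r))"
    using sc by (auto simp: split_cond_def)
  have rm: "r \<le> m" using split_cond_dims[OF B V(1) sc] by simp
  obtain Vi where Vi: "Vi \<in> carrier_mat m m" "V * Vi = 1\<^sub>m m" by (rule invertible_matE[OF V])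
  note dims = carrier_matD[OF B] carrier_matD[OF C] carrier_matD[OF M] carrier_matD[OF V(1)]
    carrier_matD[OF Vi(1)]
  show ?thesis
  proof
    assume "M * B = transpose_mat C"
    then show "M * B1 = transpose_mat C1"
      using split_cond_first_block[OF B C V(1) sc] rm by (simp add: assoc_mult_mat_dims[symmetric] dims)
  next
    assume "M * B1 = transpose_mat C1"
    then have "M * B * V = transpose_mat C * V"
      using mult_append_cols[OF M B1, of "0\<^sub>m n (m - r)" "m - r"] BV CV M
      by (simp add: assoc_mult_mat_dims dims)
    then have "M * B * V * Vi = transpose_mat C * V * Vi" by simp
    then show "M * B = transpose_mat C" using Vi(2) M B C by (simp add: assoc_mult_mat_dims dims)
  qed
qed

lemma cols_basis_iff: "cols_basis N K \<longleftrightarrow> trivial_kernel N \<and> K = (\<lambda>x. N *\<^sub>v x) ` carrier_vec (dim_col N)"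
  by (simp add: cols_basis_def trivial_kernel_def)

lemma left_annihilator_if_cols_basis:
  assumes B: "B \<in> carrier_mat n m" and C: "C \<in> carrier_mat m n" and V: "V \<in> carrier_mat m m"
    and sc: "split_cond n m r B C V B1 C1 Y"
    and NB: "NB \<in> carrier_mat n k" and basis: "cols_basis NB (mat_kernel (transpose_mat B))"
  shows "transpose_mat NB * B1 = 0\<^sub>m k r"
proof -
  have BT: "transpose_mat B \<in> carrier_mat m n" using B by simp
  have BNB: "transpose_mat B * NB = 0\<^sub>m m k"
    using basis NB by (intro mult_eq_0_if_range_in_kernel[OF BT NB]) (auto simp: cols_basis_iff)
  have "transpose_mat NB * B = 0\<^sub>m k m"
    using arg_cong[OF BNB, of transpose_mat] B NB by (simp add: transpose_mult_dims)
  then show ?thesis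
    using split_cond_first_block(1)[OF B C V sc] split_cond_dims[OF B V sc] B NB V
    by (simp add: assoc_mult_mat_dims[symmetric])
qed

text \<open>
  \<open>N\<close> may be any matrix of full column rank with \<open>N\<^sup>T B\<^sub>1 = 0\<close>, for instance a basis \<open>N\<^sub>B\<close> of
  \<open>Ker B\<^sup>T\<close>. \<open>T0\<close> and \<open>TZ Z\<close> are the matrices \<open>T\<^sub>0\<close> and \<open>T\<^sub>Z\<close> of part (b); \<open>E1\<close> and \<open>E2\<close>
  embed the first \<open>n - r\<close> and the last \<open>r\<close> coordinates.
\<close>

locale split_normal_form =
  fixes n m r :: nat and B C V B1 C1 Y Yi N :: "real mat"
  assumes B: "B \<in> carrier_mat n m" and C: "C \<in> carrier_mat m n"
    and V: "V \<in> carrier_mat m m" "invertible_mat V"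
    and split: "split_cond n m r B C V B1 C1 Y"
    and Yi: "Y * Yi = 1\<^sub>m r" "Yi * Y = 1\<^sub>m r"
    and N: "N \<in> carrier_mat n (n - r)" "trivial_kernel N" "transpose_mat N * B1 = 0\<^sub>m (n - r) r"
begin

lemma carriers: "B1 \<in> carrier_mat n r" "C1 \<in> carrier_mat r n" "Y \<in> carrier_mat r r" "Yi \<in> carrier_mat r r"
  and CB: "C1 * B1 = Y * transpose_mat Y"
  and r_le: "r \<le> n"
proof -
  show Y: "Y \<in> carrier_mat r r" and "B1 \<in> carrier_mat n r" "C1 \<in> carrier_mat r n"
    and "C1 * B1 = Y * transpose_mat Y"
    using split by (auto simp: split_cond_def)
  show "Yi \<in> carrier_mat r r"
    using arg_cong[OF Yi(1), of dim_col] arg_cong[OF Yi(2), of dim_row] Y by auto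
  show "r \<le> n" using split_cond_dims[OF B V(1) split] by simp
qed

definition E1 :: "real mat" where "E1 = 1\<^sub>m (n - r) @\<^sub>r 0\<^sub>m r (n - r)"

definition E2 :: "real mat" where "E2 = 0\<^sub>m (n - r) r @\<^sub>r 1\<^sub>m r"

definition T0 :: "real mat" where "T0 = transpose_mat N @\<^sub>r (Yi * C1)"

definition TZ :: "real mat \<Rightarrow> real mat" where
  "TZ Z = four_block_mat Z (0\<^sub>m (n - r) r) (0\<^sub>m r (n - r)) (1\<^sub>m r)"

lemma E_carrier: "E1 \<in> carrier_mat n (n - r)" "E2 \<in> carrier_mat n r"
  using r_le carrier_append_rows[of "1\<^sub>m (n - r)" "n - r" "n - r" "0\<^sub>m r (n - r)" r]
    carrier_append_rows[of "0\<^sub>m (n - r) r" "n - r" r "1\<^sub>m r" r] by (simp_all add: E1_def E2_def)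

lemma coordinate_embeddings: "append_cols E1 E2 = 1\<^sub>m n" "transpose_mat E1 * E1 = 1\<^sub>m (n - r)"
  "transpose_mat E1 * E2 = 0\<^sub>m (n - r) r"
proof -
  show "append_cols E1 E2 = 1\<^sub>m n" using r_le by (intro eq_matI) (auto simp: E1_def E2_def)
  have E1T: "transpose_mat E1 = append_cols (1\<^sub>m (n - r)) (0\<^sub>m (n - r) r)"
    using transpose_append_rows[of "1\<^sub>m (n - r)" "n - r" "n - r" "0\<^sub>m r (n - r)" r] by (simp add: E1_def)
  show "transpose_mat E1 * E1 = 1\<^sub>m (n - r)"
    unfolding E1T by (unfold E1_def, subst append_cols_mult_append_rows[of _ "n - r" "n - r" _ r]) auto
  show "transpose_mat E1 * E2 = 0\<^sub>m (n - r) r"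
    unfolding E1T by (unfold E2_def, subst append_cols_mult_append_rows[of _ "n - r" "n - r" _ r]) auto
qed

lemma TZ_carrier: "Z \<in> carrier_mat (n - r) (n - r) \<Longrightarrow> TZ Z \<in> carrier_mat n n"
  using four_block_carrier_mat[of Z "n - r" "n - r" "1\<^sub>m r" r r] r_le by (simp add: TZ_def)

lemma TZ_mult_E2: "Z \<in> carrier_mat (n - r) (n - r) \<Longrightarrow> TZ Z * E2 = E2"
  using block_diag_one_mult_last_block[of Z "n - r" r] by (simp add: TZ_def E2_def)

lemma transpose_TZ:
  assumes "Z \<in> carrier_mat (n - r) (n - r)"
  shows "transpose_mat (TZ Z) = TZ (transpose_mat Z)"
  using transpose_four_block_mat[OF assms zero_carrier_mat zero_carrier_mat one_carrier_mat]
  by (simp add: TZ_def)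

lemma T0_carrier: "T0 \<in> carrier_mat n n"
  using carrier_append_rows[of "transpose_mat N" "n - r" n "Yi * C1" r] N carriers r_le
  by (simp add: T0_def)

lemma T0_mult_B1: "T0 * (B1 * transpose_mat Yi) = E2"
proof -
  note dims = carrier_matD[OF N(1)] carrier_matD[OF carriers(1)] carrier_matD[OF carriers(2)]
    carrier_matD[OF carriers(3)] carrier_matD[OF carriers(4)]
  have "transpose_mat N * (B1 * transpose_mat Yi) = transpose_mat N * B1 * transpose_mat Yi"
    by (simp add: assoc_mult_mat_dims dims)
  then have top: "transpose_mat N * (B1 * transpose_mat Yi) = 0\<^sub>m (n - r) r"
    using N(3) carriers by simp
  have "Yi * C1 * (B1 * transpose_mat Yi) = Yi * (C1 * B1) * transpose_mat Yi"
    by (simp add: assoc_mult_mat_dims dims)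
  also have "\<dots> = Yi * Y * transpose_mat (Yi * Y)"
    by (simp add: CB assoc_mult_mat_dims transpose_mult_dims dims)
  finally have bottom: "Yi * C1 * (B1 * transpose_mat Yi) = 1\<^sub>m r" using Yi(2) by simp
  show ?thesis
    unfolding T0_def E2_def
    using append_rows_mult[of "transpose_mat N" "n - r" n "Yi * C1" r "B1 * transpose_mat Yi" r]
      N carriers top bottom by simp
qed

lemma transpose_E2_mult_T0: "transpose_mat E2 * T0 = Yi * C1"
proof -
  have "transpose_mat E2 * T0 = 0\<^sub>m r (n - r) * transpose_mat N + 1\<^sub>m r * (Yi * C1)"
    unfolding T0_def E2_def transpose_append_rows[of "0\<^sub>m (n - r) r" "n - r" r "1\<^sub>m r" r, simplified]
    using N carriers by (intro append_cols_mult_append_rows[of _ r "n - r" _ r _ n]) auto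
  then show ?thesis using N carriers by simp
qed

lemma T0_invertible: "invertible_mat T0"
proof -
  have NT: "transpose_mat N \<in> carrier_mat (n - r) n" and YC: "Yi * C1 \<in> carrier_mat r n"
    using N carriers by auto
  define K where "K = transpose_mat C1 * transpose_mat Yi"
  have K: "K \<in> carrier_mat n r" using carriers by (simp add: K_def)
  note dims = carrier_matD[OF N(1)] carrier_matD[OF carriers(1)] carrier_matD[OF carriers(2)]
    carrier_matD[OF carriers(3)] carrier_matD[OF carriers(4)]
  have T0T: "transpose_mat T0 = append_cols N K"
    unfolding T0_def transpose_append_rows[OF NT YC] by (simp add: K_def transpose_mult_dims dims)
  have BN: "transpose_mat B1 * N = 0\<^sub>m r (n - r)"
    using arg_cong[OF N(3), of transpose_mat] by (simp add: transpose_mult_dims dims)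
  have BK: "transpose_mat B1 * K = Y"
  proof -
    have "transpose_mat B1 * K = transpose_mat (Yi * (C1 * B1))"
      by (simp add: K_def transpose_mult_dims assoc_mult_mat_dims dims)
    also have "\<dots> = transpose_mat (Yi * Y * transpose_mat Y)" by (simp add: CB assoc_mult_mat_dims dims)
    finally show ?thesis using Yi(2) carriers by simp
  qed
  have "trivial_kernel Y"
    using carriers(3) split invertible_mat_iff_trivial_kernel[of Y r] by (simp add: split_cond_def)
  then have "trivial_kernel (transpose_mat T0)"
    unfolding T0T using BN BK N carriers K by (intro trivial_kernel_append_cols[OF N(1) K, of "transpose_mat B1" r]) auto
  then have "invertible_mat (transpose_mat T0)"
    using invertible_mat_iff_trivial_kernel[of "transpose_mat T0" n] T0_carrier by simp
  then show ?thesis using invertible_mat_transpose[of "transpose_mat T0" n] T0_carrier by simp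
qed

lemma inv_cond_iff_gram:
  assumes T: "T \<in> carrier_mat n n"
  shows "inv_cond T B C \<longleftrightarrow> invertible_mat T \<and> transpose_mat T * T * B1 = transpose_mat C1"
  using inv_cond_iff[OF T B C] solution_iff_split[OF B C _ V split, of "transpose_mat T * T"] T by simp

lemma mult_B1_iff:
  assumes M: "M \<in> carrier_mat k n"
  shows "M * B1 = transpose_mat C1 \<longleftrightarrow> M * (B1 * transpose_mat Yi) = transpose_mat C1 * transpose_mat Yi"
proof -
  note dims = carrier_matD[OF M] carrier_matD[OF carriers(1)] carrier_matD[OF carriers(2)]
    carrier_matD[OF carriers(3)] carrier_matD[OF carriers(4)]
  have YY: "transpose_mat Yi * transpose_mat Y = 1\<^sub>m r"
    using arg_cong[OF Yi(1), of transpose_mat] by (simp add: transpose_mult_dims dims)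
  show ?thesis
  proof
    assume "M * B1 = transpose_mat C1"
    then show "M * (B1 * transpose_mat Yi) = transpose_mat C1 * transpose_mat Yi"
      by (simp add: assoc_mult_mat_dims[symmetric] dims)
  next
    assume eq: "M * (B1 * transpose_mat Yi) = transpose_mat C1 * transpose_mat Yi"
    have "M * B1 = M * (B1 * transpose_mat Yi) * transpose_mat Y"
      by (simp add: assoc_mult_mat_dims YY dims)
    also have "\<dots> = transpose_mat C1" unfolding eq by (simp add: assoc_mult_mat_dims YY dims)
    finally show "M * B1 = transpose_mat C1" .
  qed
qed

lemma inv_cond_of_factorization:
  assumes U: "U \<in> carrier_mat n n" "real_orth U"
    and Z: "Z \<in> carrier_mat (n - r) (n - r)" "invertible_mat Z"
  shows "inv_cond (U * TZ Z * T0) B C"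
proof -
  define T where "T = U * TZ Z * T0"
  have T: "T \<in> carrier_mat n n" using U TZ_carrier[OF Z(1)] T0_carrier by (simp add: T_def)
  have "invertible_mat (TZ Z)" using block_diag_one_invertible[OF Z, of r] by (simp add: TZ_def)
  then have "invertible_mat T"
    using invertible_mat_mult[of "U * TZ Z" n, OF _ T0_carrier _ T0_invertible] TZ_carrier[OF Z(1)]
      invertible_mat_mult[OF U(1) TZ_carrier[OF Z(1)] real_orth_invertible[OF U]] U
    by (simp add: T_def)
  moreover have "transpose_mat T * T * (B1 * transpose_mat Yi) = transpose_mat C1 * transpose_mat Yi"
  proof -
    note dims = carrier_matD[OF U(1)] carrier_matD[OF TZ_carrier[OF Z(1)]] carrier_matD[OF T0_carrier]
      carrier_matD[OF E_carrier(2)] carrier_matD[OF carriers(1)] carrier_matD[OF carriers(2)]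
      carrier_matD[OF carriers(3)] carrier_matD[OF carriers(4)]
    have "transpose_mat T * T * (B1 * transpose_mat Yi) = transpose_mat T0 *
        (transpose_mat (TZ Z) * ((transpose_mat U * U) * (TZ Z * (T0 * (B1 * transpose_mat Yi)))))"
      by (simp add: T_def transpose_mult_dims assoc_mult_mat_dims dims)
    also have "\<dots> = transpose_mat T0 * E2"
      using U Z(1) TZ_carrier[OF Z(1)] E_carrier
      by (simp add: real_orth_def T0_mult_B1 TZ_mult_E2 transpose_TZ)
    also have "\<dots> = transpose_mat (transpose_mat E2 * T0)" by (simp add: transpose_mult_dims dims)
    finally show ?thesis by (simp add: transpose_E2_mult_T0 transpose_mult_dims dims)
  qed
  ultimately show ?thesis using inv_cond_iff_gram[OF T] mult_B1_iff[of "transpose_mat T * T" n] T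
    by (simp add: T_def)
qed

lemma solution_columns_orthonormal:
  assumes T: "T \<in> carrier_mat n n" and gram: "transpose_mat T * T * B1 = transpose_mat C1"
    and T0i: "T0i \<in> carrier_mat n n" "T0 * T0i = 1\<^sub>m n" "T0i * T0 = 1\<^sub>m n"
  shows "transpose_mat (T * T0i * E2) * (T * T0i * E2) = 1\<^sub>m r"
    and "transpose_mat (T * T0i * E1) * (T * T0i * E2) = 0\<^sub>m (n - r) r"
proof -
  note dims = carrier_matD[OF T] carrier_matD[OF T0_carrier] carrier_matD[OF T0i(1)]
    carrier_matD[OF E_carrier(1)] carrier_matD[OF E_carrier(2)] carrier_matD[OF carriers(1)]
    carrier_matD[OF carriers(2)] carrier_matD[OF carriers(3)] carrier_matD[OF carriers(4)]
  have "T0i * E2 = T0i * T0 * (B1 * transpose_mat Yi)"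
    unfolding T0_mult_B1[symmetric] by (simp add: assoc_mult_mat_dims dims)
  then have T0iE2: "T0i * E2 = B1 * transpose_mat Yi" using T0i(3) carriers by simp
  have M: "transpose_mat T * (T * (B1 * transpose_mat Yi)) = transpose_mat C1 * transpose_mat Yi"
    using mult_B1_iff[of "transpose_mat T * T" n] gram T by (simp add: assoc_mult_mat_dims dims)
  have "transpose_mat (T * T0i * E2) * (T * T0i * E2) = Yi * (transpose_mat (C1 * B1) * transpose_mat Yi)"
    using M T0iE2 by (simp add: transpose_mult_dims assoc_mult_mat_dims dims)
  also have "\<dots> = (Yi * Y) * transpose_mat (Yi * Y)"
    by (simp add: CB transpose_mult_dims assoc_mult_mat_dims dims)
  finally show "transpose_mat (T * T0i * E2) * (T * T0i * E2) = 1\<^sub>m r" using Yi(2) by simp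
  have "transpose_mat (T * T0i * E1) * (T * T0i * E2) = transpose_mat E1 * transpose_mat (Yi * C1 * T0i)"
    using M T0iE2 by (simp add: transpose_mult_dims assoc_mult_mat_dims dims)
  also have "Yi * C1 * T0i = transpose_mat E2 * (T0 * T0i)"
    unfolding transpose_E2_mult_T0[symmetric] by (simp add: assoc_mult_mat_dims dims)
  finally show "transpose_mat (T * T0i * E1) * (T * T0i * E2) = 0\<^sub>m (n - r) r"
    using coordinate_embeddings(3) T0i(2) E_carrier by simp
qed

lemma factorization_of_inv_cond:
  assumes T: "T \<in> carrier_mat n n" and sol: "inv_cond T B C"
  shows "\<exists>U Z. U \<in> carrier_mat n n \<and> real_orth U \<and> Z \<in> carrier_mat (n - r) (n - r) \<and>
    invertible_mat Z \<and> T = U * TZ Z * T0"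
proof -
  have inv: "invertible_mat T" and gram: "transpose_mat T * T * B1 = transpose_mat C1"
    using sol inv_cond_iff_gram[OF T] by auto
  obtain T0i where T0i: "T0i \<in> carrier_mat n n" "T0 * T0i = 1\<^sub>m n" "T0i * T0 = 1\<^sub>m n"
    by (rule invertible_matE[OF T0_carrier T0_invertible])
  define S where "S = T * T0i"
  have S: "S \<in> carrier_mat n n" using T T0i by (simp add: S_def)
  have "invertible_mat S"
    using invertible_mat_mult[OF T T0i(1) inv invertible_matI[OF T0i(1) T0_carrier T0i(3,2)]]
    by (simp add: S_def)
  then have "trivial_kernel S" using invertible_mat_iff_trivial_kernel[OF S] by simp
  moreover have "trivial_kernel E1"
    using trivial_kernel_if_left_inverse[OF E_carrier(1) _ coordinate_embeddings(2)] E_carrier by simp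
  ultimately have "trivial_kernel (S * E1)" using trivial_kernel_mult[OF S E_carrier(1)] by simp
  then obtain U Z where U: "U \<in> carrier_mat n n" "real_orth U" and Z: "Z \<in> carrier_mat (n - r) (n - r)"
    "invertible_mat Z" and SUZ: "append_cols (S * E1) (S * E2) = U * TZ Z"
    using orthogonal_block_factorization[of "S * E1" "n - r" r "S * E2"]
      solution_columns_orthonormal[OF T gram T0i] S E_carrier r_le by (auto simp: S_def TZ_def)
  have "append_cols (S * E1) (S * E2) = S"
    using mult_append_cols[OF S E_carrier] coordinate_embeddings(1) S by simp
  then have "T * T0i * T0 = U * TZ Z * T0" using SUZ by (simp add: S_def)
  then have "T = U * TZ Z * T0"
    using T0i T T0_carrier by (simp add: assoc_mult_mat_dims carrier_matD)
  then show ?thesis using U Z by blast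
qed
end

lemma split_normal_formI:
  assumes B: "B \<in> carrier_mat n m" and C: "C \<in> carrier_mat m n"
    and V: "V \<in> carrier_mat m m" "invertible_mat V" and sc: "split_cond n m r B C V B1 C1 Y"
    and "inverts_mat Y Yi" "inverts_mat Yi Y"
    and "N \<in> carrier_mat n (n - r)" "trivial_kernel N" "transpose_mat N * B1 = 0\<^sub>m (n - r) r"
  shows "split_normal_form n m r B C V B1 C1 Y Yi N"
proof -
  have Y: "Y \<in> carrier_mat r r" using sc by (simp add: split_cond_def)
  then have "Y * Yi = 1\<^sub>m r" using assms(6) by (simp add: inverts_mat_def)
  moreover have YiY: "Yi * Y = 1\<^sub>m (dim_row Yi)" using assms(7) by (simp add: inverts_mat_def)
  moreover have "dim_row Yi = r" using arg_cong[OF YiY, of dim_col] Y by simp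
  ultimately show ?thesis using assms by unfold_locales auto
qed

lemma solvable_if_split_cond:
  assumes B: "B \<in> carrier_mat n m" and C: "C \<in> carrier_mat m n"
    and V: "V \<in> carrier_mat m m" "invertible_mat V" and sc: "split_cond n m r B C V B1 C1 Y"
  shows "\<exists>T \<in> carrier_mat n n. inv_cond T B C"
proof -
  have Y: "Y \<in> carrier_mat r r" "invertible_mat Y" using sc by (auto simp: split_cond_def)
  obtain Yi where "Yi \<in> carrier_mat r r" "Y * Yi = 1\<^sub>m r" "Yi * Y = 1\<^sub>m r" by (rule invertible_matE[OF Y])
  then have inv: "inverts_mat Y Yi" "inverts_mat Yi Y" using Y by (auto simp: inverts_mat_def)
  have "B1 \<in> carrier_mat n r" using sc by (simp add: split_cond_def)
  then obtain N where "N \<in> carrier_mat n (n - r)" "trivial_kernel N" "transpose_mat N * B1 = 0\<^sub>m (n - r) r"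
    by (rule left_annihilator_exists[OF _ split_cond_dims(3)[OF B V(1) sc]])
  then interpret split_normal_form n m r B C V B1 C1 Y Yi N
    using split_normal_formI[OF B C V sc inv] by blast
  show ?thesis
    using inv_cond_of_factorization[of "1\<^sub>m n" "1\<^sub>m (n - r)"] TZ_carrier[of "1\<^sub>m (n - r)"] T0_carrier
      invertible_matI[of "1\<^sub>m (n - r)" "n - r" "1\<^sub>m (n - r)"]
    by (intro bexI[of _ "1\<^sub>m n * TZ (1\<^sub>m (n - r)) * T0"]) (auto simp: real_orth_def)
qed

lemma solutions_factorization:
  assumes B: "B \<in> carrier_mat n m" and C: "C \<in> carrier_mat m n"
    and V: "V \<in> carrier_mat m m" "invertible_mat V" and sc: "split_cond n m r B C V B1 C1 Y"
    and Yi: "inverts_mat Y Yi" "inverts_mat Yi Y" and NB: "NB \<in> carrier_mat n (n - r)"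
    and basis: "cols_basis NB (mat_kernel (transpose_mat B))" and T: "T \<in> carrier_mat n n"
  shows "inv_cond T B C \<longleftrightarrow> (\<exists>U Z. U \<in> carrier_mat n n \<and> real_orth U \<and>
    Z \<in> carrier_mat (n - r) (n - r) \<and> invertible_mat Z \<and>
    T = U * four_block_mat Z (0\<^sub>m (n - r) r) (0\<^sub>m r (n - r)) (1\<^sub>m r) * (transpose_mat NB @\<^sub>r (Yi * C1)))"
proof -
  interpret split_normal_form n m r B C V B1 C1 Y Yi NB
    using split_normal_formI[OF B C V sc Yi NB] basis left_annihilator_if_cols_basis[OF B C V(1) sc NB basis]
    by (simp add: cols_basis_iff)
  show ?thesis using factorization_of_inv_cond[OF T] inv_cond_of_factorization by (auto simp: TZ_def T0_def)
qed

theorem lemma3p2: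
  fixes B C :: "real mat" and n m r :: nat
  assumes B: "B \<in> carrier_mat n m"
    and C: "C \<in> carrier_mat m n"
    and rk: "mrank B = r"
  shows
   "((\<exists>T \<in> carrier_mat n n. inv_cond T B C) \<longleftrightarrow>
       mat_kernel (transpose_mat C) = mat_kernel B \<and> mrank (C * B) = r \<and> sym_psd (C * B))
  \<and> ((\<exists>T \<in> carrier_mat n n. inv_cond T B C) \<longleftrightarrow>
       (\<exists>V \<in> carrier_mat m m. invertible_mat V \<and> (\<exists>B1 C1 Y. split_cond n m r B C V B1 C1 Y)))
  \<and> ((\<exists>T \<in> carrier_mat n n. inv_cond T B C) \<longleftrightarrow>
       (\<exists>V \<in> carrier_mat m m. real_orth V \<and> (\<exists>B1 C1 Y. split_cond n m r B C V B1 C1 Y)))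
  \<and> (\<forall>V B1 C1 Y Yi NB.
       V \<in> carrier_mat m m \<longrightarrow> invertible_mat V \<longrightarrow> split_cond n m r B C V B1 C1 Y \<longrightarrow>
       inverts_mat Y Yi \<longrightarrow> inverts_mat Yi Y \<longrightarrow>
       NB \<in> carrier_mat n (n - r) \<longrightarrow> cols_basis NB (mat_kernel (transpose_mat B)) \<longrightarrow>
       (\<forall>T \<in> carrier_mat n n. inv_cond T B C \<longleftrightarrow>
          (\<exists>U Z. U \<in> carrier_mat n n \<and> real_orth U \<and>
                 Z \<in> carrier_mat (n - r) (n - r) \<and> invertible_mat Z \<and>
                 T = U * four_block_mat Z (0\<^sub>m (n - r) r) (0\<^sub>m r (n - r)) (1\<^sub>m r)
                       * (transpose_mat NB @\<^sub>r (Yi * C1)))))"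
proof -
  txt \<open>Part (a) is the cycle of implications: solvable, then the kernel, rank and
    semidefiniteness conditions, then an orthogonal split, then an invertible split, then solvable.\<close>
  show ?thesis
    using kernel_rank_psd_if_solution[OF B C] split_cond_if_kernel_rank_psd[OF B C rk]
      real_orth_invertible solvable_if_split_cond[OF B C] solutions_factorization[OF B C] rk
    by (smt (verit))
qed

end
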